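(* Let $\mathcal A$ be a unital $C^*$-algebra and $\mathcal F\subseteq\mathcal A$ an algebra of finite type elements. Let $p,q\in\mathcal F$ be projections, let $a\in\mathcal A$ be invertible up to $(p,q)$ with $qa(1-p)=0$, and let $(p_\alpha)$ be an approximate unit for $\mathcal F$ consisting of projections with $p_\alpha\ge p$ for all $\alpha$. Then there exists an approximate unit $(q_\alpha)$ for $\mathcal F$ consisting of projections (indexed by the same directed set) such that for all $\alpha$: $q_\alpha-q$ is a projection with $q_\alpha-q\sim p_\alpha-p$, $a$ is invertible up to $(p_\alpha,q_\alpha)$, and $$(1-q_\alpha)a(p_\alpha-p)=0.$$
   Context: Let $\mathcal A$ be a unital $C^*$-algebra. A subalgebra $\mathcal F\subseteq\mathcal A$ is an algebra of finite type elements if: (i) $\mathcal F$ is a self-adjoint two-sided ideal of $\mathcal A$; (ii) $\mathcal F$ has an approximate unit consisting of projections, where an approximate unit consisting of projections is a net $(p_\alpha)$ of projections in $\mathcal F$ with $\|f-p_\alpha f\|\to0$ and $\|f-fp_\alpha\|\to0$ for every $f\in\mathcal F$; (iii) for any projections $p,q\in\mathcal F$ there is $v\in\mathcal A$ with $vv^*=q$ and $v^*vp=0$. Projections $p,q$ are equivalent, $p\sim q$, if there is $v\in\mathcal A$ with $vv^*=p$, $v^*v=q$. For $a\in\mathcal A$ and projections $p,q\in\mathcal A$, $a$ is invertible up to $(p,q)$ if there is $b\in\mathcal A$ with $b=(1-p)b(1-q)$, $(1-q)a(1-p)b=1-q$ and $b(1-q)a(1-p)=1-p$. *)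

theory Defs
  imports "HOL-Analysis.Analysis"
begin

text \<open>Unital C*-algebras: a unital complex Banach algebra (the real normed algebra
structure of the type together with a complex scalar multiplication extending
the real one) with an involution satisfying the C*-identity.\<close>

locale unital_cstar_algebra =
  fixes star :: "'a::{real_normed_algebra_1, banach} \<Rightarrow> 'a"
    and cscale :: "complex \<Rightarrow> 'a \<Rightarrow> 'a"
  assumes cscale_one: "cscale 1 x = x"
    and cscale_assoc: "cscale (c * d) x = cscale c (cscale d x)"
    and cscale_add_left: "cscale (c + d) x = cscale c x + cscale d x"
    and cscale_add_right: "cscale c (x + y) = cscale c x + cscale c y"
    and cscale_of_real: "cscale (complex_of_real r) x = scaleR r x"
    and cscale_mult_left: "cscale c (x * y) = cscale c x * y"
    and cscale_mult_right: "cscale c (x * y) = x * cscale c y"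
    and norm_cscale: "norm (cscale c x) = cmod c * norm x"
    and star_star: "star (star x) = x"
    and star_add: "star (x + y) = star x + star y"
    and star_cscale: "star (cscale c x) = cscale (cnj c) (star x)"
    and star_mult: "star (x * y) = star y * star x"
    and cstar_identity: "norm (star x * x) = (norm x)\<^sup>2"

definition is_proj :: "('a::ring \<Rightarrow> 'a) \<Rightarrow> 'a \<Rightarrow> bool" where
  "is_proj star p \<longleftrightarrow> p * p = p \<and> star p = p"

definition invertible_el :: "'a::ring_1 \<Rightarrow> bool" where
  "invertible_el x \<longleftrightarrow> (\<exists>y. x * y = 1 \<and> y * x = 1)"

definition positive_el :: "('a::ring_1 \<Rightarrow> 'a) \<Rightarrow> (complex \<Rightarrow> 'a \<Rightarrow> 'a) \<Rightarrow> 'a \<Rightarrow> bool" where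
  "positive_el star cscale x \<longleftrightarrow> star x = x \<and>
     (\<forall>z. \<not> invertible_el (x - cscale z 1) \<longrightarrow> Im z = 0 \<and> Re z \<ge> 0)"

definition cstar_le :: "('a::ring_1 \<Rightarrow> 'a) \<Rightarrow> (complex \<Rightarrow> 'a \<Rightarrow> 'a) \<Rightarrow> 'a \<Rightarrow> 'a \<Rightarrow> bool" where
  "cstar_le star cscale x y \<longleftrightarrow> positive_el star cscale (y - x)"

definition proj_equiv :: "('a::ring \<Rightarrow> 'a) \<Rightarrow> 'a \<Rightarrow> 'a \<Rightarrow> bool" where
  "proj_equiv star p q \<longleftrightarrow> (\<exists>v. v * star v = p \<and> star v * v = q)"

definition invertible_upto :: "'a::ring_1 \<Rightarrow> 'a \<Rightarrow> 'a \<Rightarrow> bool" where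
  "invertible_upto a p q \<longleftrightarrow> (\<exists>b. b = (1 - p) * b * (1 - q) \<and>
      (1 - q) * a * (1 - p) * b = 1 - q \<and> b * (1 - q) * a * (1 - p) = 1 - p)"

definition directed_set :: "'i set \<Rightarrow> ('i \<Rightarrow> 'i \<Rightarrow> bool) \<Rightarrow> bool" where
  "directed_set I le \<longleftrightarrow> I \<noteq> {} \<and> (\<forall>i\<in>I. le i i) \<and>
     (\<forall>i\<in>I. \<forall>j\<in>I. \<forall>k\<in>I. le i j \<longrightarrow> le j k \<longrightarrow> le i k) \<and>
     (\<forall>i\<in>I. \<forall>j\<in>I. \<exists>k\<in>I. le i k \<and> le j k)"

definition approx_unit_proj ::
  "('a::real_normed_algebra \<Rightarrow> 'a) \<Rightarrow> 'a set \<Rightarrow> 'i set \<Rightarrow> ('i \<Rightarrow> 'i \<Rightarrow> bool) \<Rightarrow> ('i \<Rightarrow> 'a) \<Rightarrow> bool" where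
  "approx_unit_proj star F I le P \<longleftrightarrow>
     (\<forall>\<alpha>\<in>I. P \<alpha> \<in> F \<and> is_proj star (P \<alpha>)) \<and>
     (\<forall>f\<in>F. \<forall>\<epsilon>>0. \<exists>\<alpha>0\<in>I. \<forall>\<alpha>\<in>I. le \<alpha>0 \<alpha> \<longrightarrow>
         norm (f - P \<alpha> * f) < \<epsilon> \<and> norm (f - f * P \<alpha>) < \<epsilon>)"

definition sa_ideal :: "('a::ring \<Rightarrow> 'a) \<Rightarrow> (complex \<Rightarrow> 'a \<Rightarrow> 'a) \<Rightarrow> 'a set \<Rightarrow> bool" where
  "sa_ideal star cscale F \<longleftrightarrow> 0 \<in> F \<and>
     (\<forall>x\<in>F. \<forall>y\<in>F. x + y \<in> F) \<and>
     (\<forall>c. \<forall>x\<in>F. cscale c x \<in> F) \<and>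
     (\<forall>x\<in>F. \<forall>a. a * x \<in> F \<and> x * a \<in> F) \<and>
     (\<forall>x\<in>F. star x \<in> F)"

definition finite_type_algebra ::
  "('a::{real_normed_algebra_1} \<Rightarrow> 'a) \<Rightarrow> (complex \<Rightarrow> 'a \<Rightarrow> 'a) \<Rightarrow> 'a set \<Rightarrow> bool" where
  "finite_type_algebra star cscale F \<longleftrightarrow>
     sa_ideal star cscale F \<and>
     (\<exists>(I::'a set set) le P. directed_set I le \<and> approx_unit_proj star F I le P) \<and>
     (\<forall>p\<in>F. \<forall>q\<in>F. is_proj star p \<longrightarrow> is_proj star q \<longrightarrow>
        (\<exists>v. v * star v = q \<and> star v * v * p = 0))"

end

theory Submission
  imports Defs "HOL-Computational_Algebra.Formal_Power_Series"
begin

text \<open>For each \<alpha>, positivity of P \<alpha> - p forces p \<le> P \<alpha>, so e = P \<alpha> - p is a projection under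
  1 - p, and x = a e is bounded below on e because b x = e for the inverse b of a up to (p, q).
  The range projection r = x (x* x)\<inverse> x* of x (inverse taken in the corner e A e) is then
  equivalent to e and, since q a (1 - p) = 0, orthogonal to q. The projection Q \<alpha> = q + r works:
  (1 - P \<alpha>) b (1 - Q \<alpha>) inverts a up to (P \<alpha>, Q \<alpha>), and
  \<parallel>(1 - Q \<alpha>) f\<parallel> \<le> \<parallel>(1 - q) a (1 - p)\<parallel> \<parallel>(1 - P \<alpha>) b f\<parallel>, so Q inherits the approximate-unit
  property from P. Since positivity is defined spectrally, this needs the basic C*-algebra facts:
  the norm of a self-adjoint element equals its spectral radius (by Rickart's elementary argument),
  positive elements have positive square roots, and z* z is positive.\<close>

context unital_cstar_algebra
begin

declare cscale_one [simp]

lemma cscale_zero_left [simp]: "cscale 0 x = 0"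
  using cscale_of_real[of 0 x] by simp

lemma cscale_zero_right [simp]: "cscale c 0 = 0"
  using cscale_add_right[of c 0 0] by simp

lemma cscale_minus_left: "cscale (- c) x = - cscale c x"
  using cscale_add_left[of c "-c" x] by (simp add: eq_neg_iff_add_eq_0 add.commute)

lemma cscale_minus_right: "cscale c (- x) = - cscale c x"
  using cscale_add_right[of c x "-x"] by (simp add: eq_neg_iff_add_eq_0 add.commute)

lemma cscale_diff_left: "cscale (c - d) x = cscale c x - cscale d x"
  using cscale_add_left[of c "-d" x] by (simp add: cscale_minus_left)

lemma cscale_diff_right: "cscale c (x - y) = cscale c x - cscale c y"
  using cscale_add_right[of c x "-y"] by (simp add: cscale_minus_right)

lemma scaleR_eq_cscale: "scaleR r x = cscale (complex_of_real r) x"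
  by (simp add: cscale_of_real)

lemma cscale_mult: "cscale c x * cscale d y = cscale (c * d) (x * y)"
  by (metis cscale_assoc cscale_mult_left cscale_mult_right mult.commute)

lemma cscale_one_mult: "cscale c 1 * x = cscale c x"
  by (metis cscale_mult_left mult_1_left)

lemma mult_cscale_one: "x * cscale c 1 = cscale c x"
  by (metis cscale_mult_right mult_1_right)

lemma cscale_sum_left: "cscale (sum f A) x = (\<Sum>k\<in>A. cscale (f k) x)"
  by (induct A rule: infinite_finite_induct) (auto simp: cscale_add_left)

lemma cscale_power: "(cscale c x) ^ n = cscale (c ^ n) (x ^ n)"
  by (induct n) (auto simp: cscale_one cscale_mult)

lemma cscale_of_nat_one: "cscale (of_nat n) 1 = (of_nat n :: 'a)"
  using cscale_of_real[of "real n" 1] by (simp add: of_real_def[symmetric])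

lemma star_zero [simp]: "star 0 = 0"
  using star_add[of 0 0] by simp

lemma star_one [simp]: "star 1 = 1"
  using star_mult[of "star 1" 1] by (simp add: star_star)

lemma star_minus: "star (- x) = - star x"
  using star_add[of x "-x"] by (simp add: eq_neg_iff_add_eq_0 add.commute)

lemma star_diff: "star (x - y) = star x - star y"
  using star_add[of x "-y"] by (simp add: star_minus)

lemma star_scaleR: "star (scaleR r x) = scaleR r (star x)"
  by (simp add: scaleR_eq_cscale star_cscale)

lemma star_power: "star (x ^ n) = (star x) ^ n"
  by (induct n) (auto simp: star_mult power_commutes)

lemma norm_star [simp]: "norm (star x) = norm x"
proof -
  have le: "norm y \<le> norm (star y)" for y
  proof (cases "y = 0")
    case False
    have "(norm y)\<^sup>2 = norm (star y * y)" by (simp add: cstar_identity)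
    also have "\<dots> \<le> norm (star y) * norm y" by (rule norm_mult_ineq)
    finally show ?thesis using False by (simp add: power2_eq_square)
  qed simp
  show ?thesis using le[of x] le[of "star x"] by (simp add: star_star)
qed

lemma bounded_linear_star: "bounded_linear star"
  by (rule bounded_linear_intro[where K=1]) (auto simp: star_add star_scaleR)

lemma star_suminf: "summable f \<Longrightarrow> star (suminf f) = (\<Sum>n. star (f n))"
  by (rule bounded_linear.suminf[OF bounded_linear_star])

lemma norm_mult_self_selfadjoint: "star x = x \<Longrightarrow> norm (x * x) = (norm x)\<^sup>2"
  using cstar_identity[of x] by simp

lemma norm_proj_le_one:
  assumes "is_proj star p" shows "norm p \<le> 1"
proof -
  have "(norm p)\<^sup>2 = norm p" using cstar_identity[of p] assms by (simp add: is_proj_def)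
  then show ?thesis by (auto simp: power2_eq_square)
qed

end

definition inverse_el :: "'a::ring_1 \<Rightarrow> 'a" where
  "inverse_el x = (SOME y. x * y = 1 \<and> y * x = 1)"

lemma invertible_elI: "x * y = 1 \<Longrightarrow> y * x = 1 \<Longrightarrow> invertible_el x"
  unfolding invertible_el_def by blast

lemma inverse_el_cancel:
  assumes "invertible_el x" shows "x * inverse_el x = 1" "inverse_el x * x = 1"
  using someI_ex[OF assms[unfolded invertible_el_def]] unfolding inverse_el_def by auto

lemma inverse_el_unique:
  fixes x :: "'a::ring_1"
  assumes "x * y = 1" "y * x = 1" shows "inverse_el x = y"
proof -
  have x: "invertible_el x" using assms by (rule invertible_elI)
  have "inverse_el x = (y * x) * inverse_el x" using assms(2) by simp
  also have "\<dots> = y" using inverse_el_cancel(1)[OF x] by (simp add: mult.assoc)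
  finally show ?thesis .
qed

lemma invertible_inverse_el: "invertible_el x \<Longrightarrow> invertible_el (inverse_el x)"
  by (metis inverse_el_cancel invertible_elI)

lemma inverse_el_inverse_el: "invertible_el x \<Longrightarrow> inverse_el (inverse_el x) = x"
  by (metis inverse_el_cancel inverse_el_unique)

lemma invertible_mult:
  fixes x y :: "'a::ring_1"
  assumes "invertible_el x" "invertible_el y"
  shows "invertible_el (x * y)" "inverse_el (x * y) = inverse_el y * inverse_el x"
proof -
  have "x * y * (inverse_el y * inverse_el x) = x * (y * inverse_el y) * inverse_el x"
    by (simp add: mult.assoc)
  then have r: "x * y * (inverse_el y * inverse_el x) = 1" by (simp add: inverse_el_cancel assms)
  have "inverse_el y * inverse_el x * (x * y) = inverse_el y * (inverse_el x * x) * y"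
    by (simp add: mult.assoc)
  then have l: "inverse_el y * inverse_el x * (x * y) = 1" by (simp add: inverse_el_cancel assms)
  show "invertible_el (x * y)" using r l by (rule invertible_elI)
  show "inverse_el (x * y) = inverse_el y * inverse_el x" using r l by (rule inverse_el_unique)
qed

lemma invertible_minus_iff: "invertible_el (- (x::'a::ring_1)) \<longleftrightarrow> invertible_el x"
  by (metis inverse_el_cancel invertible_elI minus_mult_minus minus_minus)

lemma inverse_el_commute:
  fixes x y :: "'a::ring_1"
  assumes "invertible_el x" "y * x = x * y" shows "y * inverse_el x = inverse_el x * y"
proof -
  have "y * inverse_el x = inverse_el x * x * y * inverse_el x"
    using inverse_el_cancel(2)[OF assms(1)] by simp
  also have "\<dots> = inverse_el x * (y * x) * inverse_el x" by (simp add: assms(2) mult.assoc)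
  also have "\<dots> = inverse_el x * y * (x * inverse_el x)" by (simp add: mult.assoc)
  finally show ?thesis using inverse_el_cancel(1)[OF assms(1)] by simp
qed

lemma invertible_commuting_factor:
  fixes x y :: "'a::ring_1"
  assumes "x * y = y * x" "invertible_el (x * y)"
  shows "invertible_el x"
proof (rule invertible_elI)
  let ?w = "inverse_el (x * y)"
  have "x * ?w = ?w * x"
    by (rule inverse_el_commute[OF assms(2)]) (simp add: assms(1) mult.assoc[symmetric])
  then show "(y * ?w) * x = 1"
    using inverse_el_cancel(1)[OF assms(2)] assms(1) by (metis mult.assoc)
  show "x * (y * ?w) = 1" using inverse_el_cancel(1)[OF assms(2)] by (simp add: mult.assoc)
qed

text \<open>Jacobson's lemma: the inverse of 1 - y x is 1 + y (1 - x y)\<inverse> x.\<close>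

lemma invertible_one_minus_swap:
  fixes x y :: "'a::ring_1"
  assumes "invertible_el (1 - x * y)" shows "invertible_el (1 - y * x)"
proof (rule invertible_elI)
  let ?w = "inverse_el (1 - x * y)"
  have "(1 - y * x) * (1 + y * ?w * x) = 1 - y * x + y * ((1 - x * y) * ?w) * x"
    by (simp add: algebra_simps mult.assoc)
  then show "(1 - y * x) * (1 + y * ?w * x) = 1" using inverse_el_cancel[OF assms] by simp
  have "(1 + y * ?w * x) * (1 - y * x) = 1 - y * x + y * (?w * (1 - x * y)) * x"
    by (simp add: algebra_simps mult.assoc)
  then show "(1 + y * ?w * x) * (1 - y * x) = 1" using inverse_el_cancel[OF assms] by simp
qed

lemma one_minus_idempotent: "x * x = x \<Longrightarrow> (1 - x) * (1 - x) = (1 - (x::'a::ring_1))"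
  by (simp add: algebra_simps)

lemma neumann_series:
  fixes u :: "'a::{real_normed_algebra_1, banach}"
  assumes u: "norm u < 1"
  shows "invertible_el (1 - u)" "norm (inverse_el (1 - u) - 1) \<le> norm u / (1 - norm u)"
proof -
  have nb: "norm (u ^ n) \<le> norm u ^ n" for n by (rule norm_power_ineq)
  have sg: "summable (\<lambda>n. norm u ^ n)" using u by (simp add: summable_geometric)
  have sn: "summable (\<lambda>n. norm (u ^ n))"
    by (rule summable_comparison_test[OF _ sg]) (auto intro: nb)
  have s: "summable (\<lambda>n. u ^ n)" using sn by (rule summable_norm_cancel)
  let ?S = "\<Sum>n. u ^ n"
  have "(\<lambda>n. u ^ n) \<longlonglongrightarrow> 0"
    by (rule tendsto_norm_zero_cancel, rule Lim_null_comparison[OF _ LIMSEQ_power_zero[of "norm u"]])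
      (use u nb in auto)
  then have tel: "(\<lambda>n. u ^ n - u ^ Suc n) sums 1"
    using telescope_sums' by fastforce
  have "(1 - u) * ?S = (\<Sum>n. (1 - u) * u ^ n)" by (rule suminf_mult[OF s, symmetric])
  also have "\<dots> = (\<Sum>n. u ^ n - u ^ Suc n)" by (simp add: algebra_simps)
  finally have r: "(1 - u) * ?S = 1" using tel by (simp add: sums_iff)
  have "?S * (1 - u) = (\<Sum>n. u ^ n * (1 - u))" by (rule suminf_mult2[OF s])
  also have "\<dots> = (\<Sum>n. u ^ n - u ^ Suc n)" by (simp add: algebra_simps power_commutes)
  finally have l: "?S * (1 - u) = 1" using tel by (simp add: sums_iff)
  show "invertible_el (1 - u)" using r l by (rule invertible_elI)
  have sn1: "summable (\<lambda>n. norm (u ^ Suc n))" using sn by (rule summable_Suc_iff[THEN iffD2])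
  have sg1: "summable (\<lambda>n. norm u ^ Suc n)" using sg by (rule summable_Suc_iff[THEN iffD2])
  have "?S - 1 = (\<Sum>n. u ^ Suc n)" using suminf_split_head[OF s] by simp
  then have "norm (?S - 1) \<le> (\<Sum>n. norm (u ^ Suc n))" using summable_norm[OF sn1] by simp
  also have "\<dots> \<le> (\<Sum>n. norm u ^ Suc n)" by (rule suminf_le[OF _ sn1 sg1]) (rule nb)
  also have "\<dots> = norm u / (1 - norm u)"
    using u suminf_geometric[of "norm u"] suminf_mult[OF sg, of "norm u"] by simp
  finally show "norm (inverse_el (1 - u) - 1) \<le> norm u / (1 - norm u)"
    using inverse_el_unique[OF r l] by simp
qed

lemma idempotent_near_one:
  fixes e :: "'a::{real_normed_algebra_1, banach}"
  assumes "e * e = e" "norm (e - 1) < 1" shows "e = 1"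
proof -
  have "invertible_el (1 - (1 - e))"
    using assms(2) by (intro neumann_series(1)) (simp add: norm_minus_commute)
  then have i: "invertible_el e" by simp
  have "e = inverse_el e * e * e" using inverse_el_cancel(2)[OF i] by simp
  also have "\<dots> = inverse_el e * e" using assms(1) by (simp add: mult.assoc)
  finally show ?thesis using inverse_el_cancel(2)[OF i] by simp
qed

section \<open>Spectrum\<close>

context unital_cstar_algebra
begin

lemma invertible_cscale:
  assumes "c \<noteq> 0" "invertible_el x" shows "invertible_el (cscale c x)"
proof -
  have "invertible_el (cscale c 1)"
    by (rule invertible_elI[of _ "cscale (1/c) 1"]) (use assms(1) in \<open>auto simp: cscale_mult\<close>)
  from invertible_mult(1)[OF this assms(2)] show ?thesis by (simp add: cscale_one_mult)
qed

lemma invertible_sub_scalar_iff: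
  assumes "z \<noteq> 0"
  shows "invertible_el (x - cscale z 1) \<longleftrightarrow> invertible_el (1 - cscale (1/z) x)"
proof -
  have eq: "x - cscale z 1 = cscale (- z) (1 - cscale (1/z) x)"
    and eq': "1 - cscale (1/z) x = cscale (- 1/z) (x - cscale z 1)"
    using assms by (simp_all add: cscale_diff_right cscale_assoc[symmetric] cscale_minus_left)
  show ?thesis
  proof
    assume "invertible_el (x - cscale z 1)"
    then show "invertible_el (1 - cscale (1/z) x)" unfolding eq' using assms by (intro invertible_cscale) auto
  next
    assume "invertible_el (1 - cscale (1/z) x)"
    then show "invertible_el (x - cscale z 1)" unfolding eq using assms by (intro invertible_cscale) auto
  qed
qed

lemma invertible_sub_scalar_if_norm_less:
  assumes "norm x < cmod z" shows "invertible_el (x - cscale z 1)"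
proof -
  have z: "z \<noteq> 0" using assms norm_ge_zero[of x] by auto
  have "norm (cscale (1/z) x) < 1"
    using assms z by (simp add: norm_cscale norm_divide field_simps)
  then show ?thesis using invertible_sub_scalar_iff[OF z] neumann_series(1) by blast
qed

lemma invertible_sub_scalar_swap:
  assumes z: "z \<noteq> 0" and i: "invertible_el (x * y - cscale z 1)"
  shows "invertible_el (y * x - cscale z 1)"
proof -
  have "invertible_el (1 - cscale (1/z) x * y)"
    using i invertible_sub_scalar_iff[OF z] by (simp add: cscale_mult_left)
  then have "invertible_el (1 - y * cscale (1/z) x)" by (rule invertible_one_minus_swap)
  then show ?thesis using invertible_sub_scalar_iff[OF z] by (simp add: cscale_mult_right)
qed

lemma norm_selfadjoint_add_imaginary:
  assumes sa: "star h = h"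
  shows "(norm (h + cscale (\<i> * of_real t) 1))\<^sup>2 \<le> (norm h)\<^sup>2 + t\<^sup>2"
proof -
  let ?c = "\<i> * of_real t" let ?y = "h + cscale ?c 1"
  have sy: "star ?y = h + cscale (- ?c) 1" by (simp add: star_add star_cscale sa)
  have "star ?y * ?y = h * h + (h * cscale ?c 1 + cscale (- ?c) 1 * h) + cscale (- ?c) 1 * cscale ?c 1"
    unfolding sy by (simp add: algebra_simps)
  also have "h * cscale ?c 1 + cscale (- ?c) 1 * h = 0"
    by (simp add: cscale_one_mult mult_cscale_one cscale_add_left[symmetric])
  also have "cscale (- ?c) 1 * cscale ?c 1 = scaleR (t\<^sup>2) 1"
  proof -
    have "- ?c * ?c = complex_of_real (t\<^sup>2)" by (simp add: complex_eq_iff power2_eq_square)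
    then show ?thesis by (simp only: cscale_mult mult_1_left cscale_of_real)
  qed
  finally have "star ?y * ?y = h * h + scaleR (t\<^sup>2) 1" by simp
  then have "(norm ?y)\<^sup>2 \<le> norm (h * h) + norm (scaleR (t\<^sup>2) (1::'a))"
    by (metis cstar_identity norm_triangle_ineq)
  also have "\<dots> = (norm h)\<^sup>2 + t\<^sup>2" by (simp add: norm_mult_self_selfadjoint[OF sa])
  finally show ?thesis .
qed

text \<open>A spectral value z of h forces \<bar>z + i t\<bar> \<le> \<parallel>h + i t\<parallel> for all real t; letting t grow
  against the sign of Im z contradicts the bound above.\<close>

lemma invertible_sub_scalar_selfadjoint:
  assumes sa: "star h = h" and z: "Im z \<noteq> 0"
  shows "invertible_el (h - cscale z 1)"
proof (rule ccontr)
  assume ni: "\<not> invertible_el (h - cscale z 1)"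
  have key: "(Re z)\<^sup>2 + (Im z + t)\<^sup>2 \<le> (norm h)\<^sup>2 + t\<^sup>2" for t :: real
  proof -
    let ?c = "\<i> * of_real t"
    have "h + cscale ?c 1 - cscale (z + ?c) 1 = h - cscale z 1" by (simp add: cscale_add_left)
    then have "cmod (z + ?c) \<le> norm (h + cscale ?c 1)"
      using invertible_sub_scalar_if_norm_less[of "h + cscale ?c 1" "z + ?c"] ni by (metis not_le)
    then have "(cmod (z + ?c))\<^sup>2 \<le> (norm (h + cscale ?c 1))\<^sup>2" by (simp add: power_mono)
    also have "\<dots> \<le> (norm h)\<^sup>2 + t\<^sup>2" by (rule norm_selfadjoint_add_imaginary[OF sa])
    finally show ?thesis by (simp add: cmod_power2)
  qed
  define t where "t = ((norm h)\<^sup>2 + 1) / (2 * Im z)"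
  have "2 * Im z * t \<le> (norm h)\<^sup>2"
    using key[of t] by (simp add: power2_eq_square algebra_simps) (smt (verit) zero_le_square)
  moreover have "2 * Im z * t = (norm h)\<^sup>2 + 1" using z by (simp add: t_def)
  ultimately show False by simp
qed

end

section \<open>Spectral radius of self-adjoint elements\<close>

definition unity_root :: "nat \<Rightarrow> complex" where
  "unity_root n = cis (2 * pi / real n)"

lemma unity_root_power_self: "n > 0 \<Longrightarrow> unity_root n ^ n = 1"
  unfolding unity_root_def Complex.DeMoivre by simp

lemma norm_unity_root_power_mult [simp]: "cmod (unity_root n ^ k * l) = cmod l"
  by (simp add: unity_root_def norm_mult norm_power)

lemma sum_unity_root_powers:
  assumes n: "n > 0" and m: "m < n"
  shows "(\<Sum>k<n. (unity_root n ^ k) ^ m) = (if m = 0 then of_nat n else 0)"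
proof (cases "m = 0")
  case False
  let ?x = "unity_root n ^ m"
  have "cos (2 * pi * real m / real n) \<noteq> 1"
  proof
    assume "cos (2 * pi * real m / real n) = 1"
    then obtain j :: int where "2 * pi * real m / real n = j * 2 * pi"
      by (auto simp: cos_one_2pi_int)
    then have "real m = j * real n" using n by (simp add: field_simps)
    then have "int m = j * int n" by (metis of_int_eq_iff of_int_mult of_int_of_nat_eq)
    moreover have "0 < int m" "int m < int n" using False m by auto
    ultimately show False
    proof (cases "j \<le> 0")
      case True
      then show False using \<open>int m = j * int n\<close> \<open>0 < int m\<close> mult_nonpos_nonneg[of j "int n"] by linarith
    next
      case False
      then have "1 * int n \<le> j * int n" by (intro mult_right_mono) auto
      then show False using \<open>int m = j * int n\<close> \<open>int m < int n\<close> by linarith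
    qed
  qed
  moreover have "?x = cis (2 * pi * real m / real n)"
    unfolding unity_root_def Complex.DeMoivre by (simp add: mult.commute)
  ultimately have x1: "?x \<noteq> 1" by (metis cis.sel(1) one_complex.sel(1))
  have "?x ^ n = 1"
    using unity_root_power_self[OF n] by (metis power_mult mult.commute power_one)
  then have "(\<Sum>k<n. ?x ^ k) = 0" using x1 by (simp add: sum_gp_strict)
  then show ?thesis using False by (simp add: power_mult[symmetric] mult.commute)
qed simp

lemma unity_root_double_square: "n > 0 \<Longrightarrow> unity_root (2 * n) ^ 2 = unity_root n"
  unfolding unity_root_def Complex.DeMoivre by (simp add: field_simps)

lemma unity_root_double_power_self: "n > 0 \<Longrightarrow> unity_root (2 * n) ^ n = -1"
  unfolding unity_root_def Complex.DeMoivre by (simp add: field_simps)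

lemma norm_cis_minus_one_le: "cmod (cis t - 1) \<le> \<bar>t\<bar>"
proof -
  have "(cmod (cis t - 1))\<^sup>2 = (cos t - 1)\<^sup>2 + (sin t)\<^sup>2" by (simp add: cmod_power2)
  also have "\<dots> = 4 * (sin (t/2))\<^sup>2"
    using cos_double_sin[of "t/2"] by (simp add: power2_eq_square algebra_simps sin_squared_eq)
  also have "\<dots> \<le> 4 * (t/2)\<^sup>2"
    using abs_sin_x_le_abs_x[of "t/2"] abs_le_square_iff[of "sin (t/2)" "t/2"] by simp
  also have "\<dots> = t\<^sup>2" by (simp add: power2_eq_square)
  finally show ?thesis by (simp add: abs_le_square_iff[symmetric] power2_le_iff_abs_le[symmetric])
qed

lemma norm_unity_root_double_minus_one: "n > 0 \<Longrightarrow> cmod (unity_root (2 * n) - 1) \<le> pi / real n"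
  unfolding unity_root_def using norm_cis_minus_one_le[of "2 * pi / real (2 * n)"] by simp

lemma scaleR_inverse_of_nat:
  "n > 0 \<Longrightarrow> scaleR (1 / real n) (of_nat n :: 'a::real_normed_algebra_1) = 1"
proof -
  assume n: "n > 0"
  have "(of_nat n :: 'a) = scaleR (real n) 1" by (simp add: scaleR_conv_of_real)
  then show ?thesis using n by simp
qed

lemma sum_lessThan_double: "(\<Sum>k<2 * (n::nat). f k) = (\<Sum>j<n. f (2 * j)) + (\<Sum>j<n. f (2 * j + 1))"
  by (induct n arbitrary: f) (simp_all add: algebra_simps)

lemma geometric_sum_left:
  fixes x :: "'a::ring_1" shows "(1 - x) * (\<Sum>m<n. x ^ m) = 1 - x ^ n"
proof (induct n)
  case (Suc n)
  have "(1 - x) * (\<Sum>m<Suc n. x ^ m) = (1 - x) * (\<Sum>m<n. x ^ m) + (1 - x) * x ^ n"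
    by (simp add: distrib_left)
  also have "\<dots> = 1 - x ^ Suc n" using Suc by (simp add: algebra_simps)
  finally show ?case .
qed simp

lemma geometric_sum_right:
  fixes x :: "'a::ring_1" shows "(\<Sum>m<n. x ^ m) * (1 - x) = 1 - x ^ n"
proof (induct n)
  case (Suc n)
  have "(\<Sum>m<Suc n. x ^ m) * (1 - x) = (\<Sum>m<n. x ^ m) * (1 - x) + x ^ n * (1 - x)"
    by (simp add: distrib_right)
  also have "\<dots> = 1 - x ^ Suc n" using Suc by (simp add: algebra_simps power_commutes)
  finally show ?case .
qed simp

text \<open>Rickart's elementary argument. If 1 - l a is invertible for all \<bar>l\<bar> \<le> 1, averaging
  res l = (1 - l a)\<inverse> over the n-th roots of unity gives (1 - l^n a^n)\<inverse>. Along n = 2^m these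
  averages converge, uniformly Lipschitz in l, to a function res_lim with idempotent values and
  res_lim 0 = 1; an idempotent close to 1 is 1, so res_lim 1 = 1, i.e. (1 - a^(2^m))\<inverse> \<rightarrow> 1 and
  \<parallel>a^(2^m)\<parallel> < 1 eventually.\<close>

locale invertible_on_unit_disc = unital_cstar_algebra +
  fixes a :: "'a::{real_normed_algebra_1, banach}"
  assumes invertible_one_minus: "cmod l \<le> 1 \<Longrightarrow> invertible_el (1 - cscale l a)"
begin

definition res :: "complex \<Rightarrow> 'a" where
  "res l = inverse_el (1 - cscale l a)"

lemma res_cancel:
  assumes "cmod l \<le> 1" shows "(1 - cscale l a) * res l = 1" "res l * (1 - cscale l a) = 1"
  unfolding res_def using inverse_el_cancel invertible_one_minus[OF assms] by auto

lemma norm_res_diff: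
  assumes "cmod l \<le> 1" "cmod m \<le> 1"
  shows "norm (res l - res m) \<le> norm (res l) * (cmod (l - m) * norm a) * norm (res m)"
proof -
  have "res l * cscale (l - m) a * res m = res l * ((1 - cscale m a) - (1 - cscale l a)) * res m"
    by (simp add: cscale_diff_left)
  also have "\<dots> = res l * ((1 - cscale m a) * res m) - (res l * (1 - cscale l a)) * res m"
    by (simp add: algebra_simps mult.assoc)
  finally have "res l - res m = res l * cscale (l - m) a * res m" using res_cancel assms by simp
  then have "norm (res l - res m) \<le> norm (res l * cscale (l - m) a) * norm (res m)"
    by (simp add: norm_mult_ineq)
  also have "\<dots> \<le> norm (res l) * norm (cscale (l - m) a) * norm (res m)"
    by (intro mult_right_mono norm_mult_ineq) simp
  finally show ?thesis by (simp add: norm_cscale)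
qed

lemma norm_res_diff_local:
  assumes l: "cmod l \<le> 1" and m: "cmod m \<le> 1"
    and close: "cmod (l - m) * norm a * norm (res m) \<le> 1/2"
  shows "norm (res l - res m) \<le> 2 * (norm (res m))\<^sup>2 * norm a * cmod (l - m)"
proof -
  let ?d = "norm (res l - res m)" and ?c = "cmod (l - m) * norm a * norm (res m)"
  have "?d \<le> norm (res l) * ?c" using norm_res_diff[OF l m] by (simp add: mult_ac)
  also have "\<dots> \<le> (norm (res m) + ?d) * ?c"
    using norm_triangle_ineq[of "res l - res m" "res m"] by (intro mult_right_mono) auto
  finally have "?d * (1 - ?c) \<le> norm (res m) * ?c" by (simp add: algebra_simps)
  moreover have "?d * (1/2) \<le> ?d * (1 - ?c)" using close by (intro mult_left_mono) auto
  ultimately have "?d \<le> 2 * norm (res m) * ?c" by linarith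
  then show ?thesis by (simp add: power2_eq_square mult_ac)
qed

lemma continuous_on_res: "continuous_on (cball 0 1) res"
  unfolding continuous_on_def
proof
  fix m :: complex assume m: "m \<in> cball 0 1"
  let ?K = "2 * (norm (res m))\<^sup>2 * norm a"
  have d: "((\<lambda>l. cmod (l - m)) \<longlongrightarrow> 0) (at m within cball 0 1)"
    by (intro tendsto_norm_zero LIM_zero tendsto_ident_at)
  have "((\<lambda>l. cmod (l - m) * (norm a * norm (res m))) \<longlongrightarrow> 0) (at m within cball 0 1)"
    using tendsto_mult[OF d tendsto_const] by simp
  then have "\<forall>\<^sub>F l in at m within cball 0 1. cmod (l - m) * (norm a * norm (res m)) < 1/2"
    by (rule order_tendstoD(2)) simp
  moreover have "\<forall>\<^sub>F l in at m within cball 0 1. l \<in> cball 0 1"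
    by (simp add: eventually_at_filter)
  moreover have "norm (res l - res m) \<le> ?K * cmod (l - m)"
    if "cmod (l - m) * (norm a * norm (res m)) < 1/2" "l \<in> cball 0 1" for l
    using norm_res_diff_local[of l m] that m by (simp add: mult.assoc)
  ultimately have "\<forall>\<^sub>F l in at m within cball 0 1. norm (res l - res m) \<le> ?K * cmod (l - m)"
    by (auto elim: eventually_mono[OF eventually_conj])
  moreover have "((\<lambda>l. ?K * cmod (l - m)) \<longlongrightarrow> 0) (at m within cball 0 1)"
    using tendsto_mult[OF tendsto_const d] by simp
  ultimately have "((\<lambda>l. res l - res m) \<longlongrightarrow> 0) (at m within cball 0 1)"
    by (rule Lim_null_comparison)
  then show "(res \<longlongrightarrow> res m) (at m within cball 0 1)" by (rule LIM_zero_cancel)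
qed

definition res_lip :: real where
  "res_lip = (SOME L. 0 \<le> L \<and> (\<forall>l\<in>cball 0 1. \<forall>m\<in>cball 0 1. norm (res l - res m) \<le> L * cmod (l - m)))"

lemma res_lipschitz:
  "0 \<le> res_lip" "cmod l \<le> 1 \<Longrightarrow> cmod m \<le> 1 \<Longrightarrow> norm (res l - res m) \<le> res_lip * cmod (l - m)"
proof -
  obtain C where C: "C > 0" "\<And>l. l \<in> cball 0 1 \<Longrightarrow> norm (res l) \<le> C"
    using compact_imp_bounded[OF compact_continuous_image[OF continuous_on_res compact_cball]]
    by (auto simp: bounded_pos)
  have "norm (res l - res m) \<le> (C * C * norm a) * cmod (l - m)"
    if "l \<in> cball 0 1" "m \<in> cball 0 1" for l m
  proof -
    have "norm (res l - res m) \<le> norm (res l) * (cmod (l - m) * norm a) * norm (res m)"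
      using that by (intro norm_res_diff) auto
    also have "\<dots> \<le> C * (cmod (l - m) * norm a) * C" using C that by (intro mult_mono) auto
    finally show ?thesis by (simp add: mult_ac)
  qed
  then have "\<exists>L. 0 \<le> L \<and> (\<forall>l\<in>cball 0 1. \<forall>m\<in>cball 0 1. norm (res l - res m) \<le> L * cmod (l - m))"
    using C(1) by (intro exI[of _ "C * C * norm a"]) auto
  from someI_ex[OF this] show "0 \<le> res_lip"
    "cmod l \<le> 1 \<Longrightarrow> cmod m \<le> 1 \<Longrightarrow> norm (res l - res m) \<le> res_lip * cmod (l - m)"
    unfolding res_lip_def by auto
qed

definition res_avg :: "nat \<Rightarrow> complex \<Rightarrow> 'a" where
  "res_avg n l = scaleR (1 / real n) (\<Sum>k<n. res (unity_root n ^ k * l))"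

text \<open>Each factor (1 - \<mu> a)\<inverse>, \<mu> = \<omega>^k l, divides 1 - l^n a^n with quotient \<Sum>_(m<n) \<mu>^m a^m;
  summing over k kills every power 0 < m < n.\<close>

lemma sum_res_unity_roots:
  assumes n: "n > 0" and l: "cmod l \<le> 1"
  shows "(\<Sum>k<n. res (unity_root n ^ k * l)) * (1 - cscale (l ^ n) (a ^ n)) = of_nat n"
    "(1 - cscale (l ^ n) (a ^ n)) * (\<Sum>k<n. res (unity_root n ^ k * l)) = of_nat n"
proof -
  let ?X = "cscale (l ^ n) (a ^ n)"
  define S where "S k = (\<Sum>m<n. cscale ((unity_root n ^ k * l) ^ m) (a ^ m))" for k
  have each: "res (unity_root n ^ k * l) * (1 - ?X) = S k \<and> (1 - ?X) * res (unity_root n ^ k * l) = S k"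
    for k
  proof -
    define \<mu> where "\<mu> = unity_root n ^ k * l"
    let ?x = "cscale \<mu> a"
    have "\<mu> ^ n = (unity_root n ^ n) ^ k * l ^ n"
      by (simp add: \<mu>_def power_mult_distrib power_mult[symmetric] mult.commute)
    then have xn: "?x ^ n = ?X" using unity_root_power_self[OF n] by (simp add: cscale_power)
    have Sx: "S k = (\<Sum>m<n. ?x ^ m)" by (simp add: S_def \<mu>_def cscale_power)
    have \<mu>: "cmod \<mu> \<le> 1" using l by (simp add: \<mu>_def)
    have "res \<mu> * (1 - ?X) = res \<mu> * ((1 - ?x) * (\<Sum>m<n. ?x ^ m))"
      by (simp add: geometric_sum_left xn)
    moreover have "(1 - ?X) * res \<mu> = ((\<Sum>m<n. ?x ^ m) * (1 - ?x)) * res \<mu>"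
      by (simp add: geometric_sum_right xn)
    ultimately have "res \<mu> * (1 - ?X) = (res \<mu> * (1 - ?x)) * (\<Sum>m<n. ?x ^ m)"
      "(1 - ?X) * res \<mu> = (\<Sum>m<n. ?x ^ m) * ((1 - ?x) * res \<mu>)"
      by (simp_all add: mult.assoc)
    then show ?thesis using res_cancel[OF \<mu>] Sx by (simp add: \<mu>_def)
  qed
  have "(\<Sum>k<n. S k) = (\<Sum>m<n. cscale (\<Sum>k<n. (unity_root n ^ k * l) ^ m) (a ^ m))"
    unfolding S_def by (subst sum.swap) (simp add: cscale_sum_left)
  also have "\<dots> = (\<Sum>m<n. cscale (l ^ m * (\<Sum>k<n. (unity_root n ^ k) ^ m)) (a ^ m))"
    by (simp add: power_mult_distrib sum_distrib_left mult.commute)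
  also have "\<dots> = (\<Sum>m<n. if m = 0 then cscale (of_nat n) 1 else 0)"
    by (intro sum.cong refl) (simp add: sum_unity_root_powers[OF n])
  finally have sumS: "(\<Sum>k<n. S k) = of_nat n" using n by (simp add: sum.delta cscale_of_nat_one)
  show "(\<Sum>k<n. res (unity_root n ^ k * l)) * (1 - ?X) = of_nat n"
    "(1 - ?X) * (\<Sum>k<n. res (unity_root n ^ k * l)) = of_nat n"
    by (simp_all add: sum_distrib_right sum_distrib_left each sumS)
qed

lemma res_avg_eq_inverse:
  assumes n: "n > 0" and l: "cmod l \<le> 1"
  shows "invertible_el (1 - cscale (l ^ n) (a ^ n))" "res_avg n l = inverse_el (1 - cscale (l ^ n) (a ^ n))"
proof -
  have "scaleR (1 / real n) (of_nat n :: 'a) = 1" using n by (rule scaleR_inverse_of_nat)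
  then have "res_avg n l * (1 - cscale (l ^ n) (a ^ n)) = 1" "(1 - cscale (l ^ n) (a ^ n)) * res_avg n l = 1"
    unfolding res_avg_def by (simp_all add: sum_res_unity_roots[OF n l])
  then show "invertible_el (1 - cscale (l ^ n) (a ^ n))" "res_avg n l = inverse_el (1 - cscale (l ^ n) (a ^ n))"
    by (auto intro: invertible_elI inverse_el_unique[symmetric])
qed

lemma res_avg_lipschitz:
  assumes n: "n > 0" and l: "cmod l \<le> 1" and m: "cmod m \<le> 1"
  shows "norm (res_avg n l - res_avg n m) \<le> res_lip * cmod (l - m)"
proof -
  have "res_avg n l - res_avg n m
      = scaleR (1 / real n) (\<Sum>k<n. res (unity_root n ^ k * l) - res (unity_root n ^ k * m))"
    by (simp add: res_avg_def scaleR_diff_right sum_subtractf)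
  then have "norm (res_avg n l - res_avg n m)
      = (1 / real n) * norm (\<Sum>k<n. res (unity_root n ^ k * l) - res (unity_root n ^ k * m))"
    by simp
  also have "\<dots> \<le> (1 / real n) * (\<Sum>k<n. res_lip * cmod (l - m))"
  proof (intro mult_left_mono order_trans[OF norm_sum] sum_mono)
    fix k
    have "cmod (unity_root n ^ k * l - unity_root n ^ k * m) = cmod (l - m)"
      using norm_unity_root_power_mult[of n k "l - m"] by (simp add: right_diff_distrib)
    then show "norm (res (unity_root n ^ k * l) - res (unity_root n ^ k * m)) \<le> res_lip * cmod (l - m)"
      using res_lipschitz(2)[of "unity_root n ^ k * l" "unity_root n ^ k * m"] l m by simp
  qed simp
  also have "\<dots> = res_lip * cmod (l - m)" using n by simp
  finally show ?thesis .
qed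

lemma res_avg_double:
  assumes n: "n > 0"
  shows "res_avg (2 * n) l = scaleR (1/2) (res_avg n l + res_avg n (unity_root (2 * n) * l))"
proof -
  let ?z = "unity_root (2 * n)"
  have z2: "?z ^ (2 * j) = unity_root n ^ j" for j by (simp only: power_mult unity_root_double_square[OF n])
  have "(\<Sum>k<2 * n. res (?z ^ k * l)) = (\<Sum>j<n. res (?z ^ (2 * j) * l)) + (\<Sum>j<n. res (?z ^ (2 * j + 1) * l))"
    by (rule sum_lessThan_double)
  also have "\<dots> = (\<Sum>j<n. res (unity_root n ^ j * l)) + (\<Sum>j<n. res (unity_root n ^ j * (?z * l)))"
    by (simp add: z2 mult_ac flip: z2)
  finally show ?thesis unfolding res_avg_def by (simp add: scaleR_add_right)
qed

lemma res_avg_double_mult: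
  assumes n: "n > 0" and l: "cmod l \<le> 1"
  shows "res_avg (2 * n) l = res_avg n l * res_avg n (unity_root (2 * n) * l)"
proof -
  let ?z = "unity_root (2 * n)" and ?X = "cscale (l ^ n) (a ^ n)"
  have zl: "cmod (?z * l) \<le> 1" using norm_unity_root_power_mult[of "2 * n" 1 l] l by simp
  have Y: "cscale ((?z * l) ^ n) (a ^ n) = - ?X"
    by (simp add: power_mult_distrib unity_root_double_power_self[OF n] cscale_minus_left)
  have "?X * ?X = cscale (l ^ (2 * n)) (a ^ (2 * n))"
    by (simp add: cscale_mult flip: power_add mult_2)
  then have prod: "1 - cscale (l ^ (2 * n)) (a ^ (2 * n)) = (1 + ?X) * (1 - ?X)"
    by (simp add: algebra_simps)
  have i1: "invertible_el (1 - ?X)" by (rule res_avg_eq_inverse(1)[OF n l])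
  have i2: "invertible_el (1 + ?X)" using res_avg_eq_inverse(1)[OF n zl] Y by simp
  have "res_avg (2 * n) l = inverse_el ((1 + ?X) * (1 - ?X))"
    using res_avg_eq_inverse(2)[of "2 * n" l] n l prod by simp
  also have "\<dots> = inverse_el (1 - ?X) * inverse_el (1 + ?X)" by (rule invertible_mult(2)[OF i2 i1])
  also have "\<dots> = res_avg n l * res_avg n (?z * l)"
    using res_avg_eq_inverse(2)[OF n l] res_avg_eq_inverse(2)[OF n zl] Y by simp
  finally show ?thesis .
qed

lemma res_avg_rotate_close:
  assumes n: "n > 0" and l: "cmod l \<le> 1"
  shows "norm (res_avg n (unity_root (2 * n) * l) - res_avg n l) \<le> res_lip * pi / real n"
proof -
  have zl: "cmod (unity_root (2 * n) * l) \<le> 1" using norm_unity_root_power_mult[of "2 * n" 1 l] l by simp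
  have "norm (res_avg n (unity_root (2 * n) * l) - res_avg n l) \<le> res_lip * cmod ((unity_root (2 * n) - 1) * l)"
    using res_avg_lipschitz[OF n zl l] by (simp add: algebra_simps)
  also have "\<dots> \<le> res_lip * (pi / real n * 1)"
    unfolding norm_mult using norm_unity_root_double_minus_one[OF n] l res_lipschitz(1)
    by (intro mult_left_mono mult_mono) auto
  finally show ?thesis by simp
qed

lemma res_avg_double_close:
  assumes n: "n > 0" and l: "cmod l \<le> 1"
  shows "norm (res_avg (2 * n) l - res_avg n l) \<le> res_lip * pi / real n"
proof -
  let ?x = "res_avg n l" and ?y = "res_avg n (unity_root (2 * n) * l)"
  have "scaleR (1/2) (?x + ?y) - ?x = scaleR (1/2) ((?x + ?y) - (?x + ?x))"
    by (simp only: scaleR_diff_right scaleR_2[symmetric]) simp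
  then have "norm (res_avg (2 * n) l - ?x) = (1/2) * norm (?y - ?x)"
    unfolding res_avg_double[OF n] by simp
  also have "\<dots> \<le> norm (?y - ?x)" by simp
  finally show ?thesis using res_avg_rotate_close[OF n l] by linarith
qed

lemma convergent_res_avg_dyadic:
  assumes l: "cmod l \<le> 1" shows "convergent (\<lambda>m. res_avg (2 ^ m) l)"
proof -
  let ?d = "\<lambda>m. res_avg (2 ^ Suc m) l - res_avg (2 ^ m) l"
  have "norm (?d m) \<le> res_lip * pi * (1/2) ^ m" for m
    using res_avg_double_close[of "2 ^ m" l] l by (simp add: power_one_over)
  then have "summable ?d"
    by (intro summable_comparison_test[OF _ summable_mult[OF summable_geometric]]) auto
  then have "(\<lambda>m. res_avg (2 ^ 0) l + (\<Sum>i<m. ?d i)) \<longlonglongrightarrow> res_avg (2 ^ 0) l + suminf ?d"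
    by (intro tendsto_add tendsto_const summable_LIMSEQ)
  moreover have "res_avg (2 ^ 0) l + (\<Sum>i<m. ?d i) = res_avg (2 ^ m) l" for m
    using sum_lessThan_telescope[of "\<lambda>i. res_avg (2 ^ i) l" m] by simp
  ultimately show ?thesis unfolding convergent_def by auto
qed

definition res_lim :: "complex \<Rightarrow> 'a" where
  "res_lim l = lim (\<lambda>m. res_avg (2 ^ m) l)"

lemma res_avg_dyadic_tendsto: "cmod l \<le> 1 \<Longrightarrow> (\<lambda>m. res_avg (2 ^ m) l) \<longlonglongrightarrow> res_lim l"
  unfolding res_lim_def using convergent_res_avg_dyadic convergent_LIMSEQ_iff by blast

lemma res_lim_idempotent:
  assumes l: "cmod l \<le> 1" shows "res_lim l * res_lim l = res_lim l"
proof -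
  define H where "H m = res_avg (2 ^ m) (unity_root (2 * 2 ^ m) * l)" for m
  have bound: "norm (H m - res_avg (2 ^ m) l) \<le> res_lip * pi * (1/2) ^ m" for m
    unfolding H_def using res_avg_rotate_close[of "2 ^ m" l] l by (simp add: power_one_over)
  have "(\<lambda>m. res_lip * pi * (1/2::real) ^ m) \<longlonglongrightarrow> 0"
    by (intro tendsto_mult_right_zero LIMSEQ_power_zero) simp
  then have "(\<lambda>m. H m - res_avg (2 ^ m) l) \<longlonglongrightarrow> 0"
    by (rule Lim_null_comparison[rotated]) (use bound in auto)
  then have "H \<longlonglongrightarrow> res_lim l"
    using tendsto_add[OF res_avg_dyadic_tendsto[OF l]] by fastforce
  then have "(\<lambda>m. res_avg (2 ^ m) l * H m) \<longlonglongrightarrow> res_lim l * res_lim l"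
    by (intro tendsto_mult res_avg_dyadic_tendsto[OF l])
  moreover have "res_avg (2 ^ m) l * H m = res_avg (2 ^ Suc m) l" for m
    unfolding H_def using res_avg_double_mult[of "2 ^ m" l] l by simp
  ultimately show ?thesis
    using LIMSEQ_unique LIMSEQ_Suc[OF res_avg_dyadic_tendsto[OF l]] by fastforce
qed

lemma res_lim_lipschitz:
  assumes l: "cmod l \<le> 1" and m: "cmod m \<le> 1"
  shows "norm (res_lim l - res_lim m) \<le> res_lip * cmod (l - m)"
  by (rule LIMSEQ_le_const2[OF tendsto_norm[OF tendsto_diff[OF res_avg_dyadic_tendsto[OF l]
        res_avg_dyadic_tendsto[OF m]]]]) (use res_avg_lipschitz l m in auto)

lemma res_lim_zero: "res_lim 0 = 1"
proof -
  have "res 0 = 1" unfolding res_def by (simp add: inverse_el_unique)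
  then have "res_avg (2 ^ m) 0 = 1" for m
    unfolding res_avg_def using scaleR_inverse_of_nat[of "2 ^ m", where 'a='a] by simp
  then show ?thesis using LIMSEQ_unique[OF res_avg_dyadic_tendsto[of 0]] by simp
qed

text \<open>Walk from 0 to 1 in steps shorter than 1 / res_lip: at each step res_lim stays an
  idempotent within distance 1 of 1, hence equal to 1.\<close>

lemma res_lim_one: "res_lim 1 = 1"
proof -
  define h where "h = 1 / (res_lip + 1)"
  have h: "h > 0" "h * res_lip < 1" using res_lipschitz(1) by (auto simp: h_def field_simps)
  have step: "res_lim (of_real (min 1 (real k * h))) = 1" for k
  proof (induct k)
    case (Suc k)
    let ?s = "min 1 (real k * h)" and ?t = "min 1 (real (Suc k) * h)"
    have "real (Suc k) * h = real k * h + h" by (simp add: algebra_simps)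
    then have st: "\<bar>?t - ?s\<bar> \<le> h" using h(1) by (simp add: min_def)
    have s: "0 \<le> ?s" "?s \<le> 1" and t: "0 \<le> ?t" "?t \<le> 1" using h(1) by (auto simp del: of_nat_Suc)
    show ?case
    proof (rule idempotent_near_one)
      show "res_lim (of_real ?t) * res_lim (of_real ?t) = res_lim (of_real ?t)"
        by (rule res_lim_idempotent) (use t in auto)
      have "norm (res_lim (of_real ?t) - res_lim (of_real ?s)) \<le> res_lip * cmod (of_real ?t - of_real ?s)"
        by (rule res_lim_lipschitz) (use s t in auto)
      also have "\<dots> = res_lip * \<bar>?t - ?s\<bar>" by (simp flip: of_real_diff)
      also have "\<dots> \<le> res_lip * h" using st res_lipschitz(1) by (rule mult_left_mono)
      finally show "norm (res_lim (of_real ?t) - 1) < 1" using Suc h(2) by (simp add: mult.commute)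
    qed
  qed (simp add: res_lim_zero)
  define k where "k = nat \<lceil>res_lip + 1\<rceil>"
  have "res_lip + 1 \<le> real k" unfolding k_def by linarith
  then have "(res_lip + 1) * h \<le> real k * h" using h(1) by (intro mult_right_mono) auto
  moreover have "(res_lip + 1) * h = 1" using res_lipschitz(1) by (simp add: h_def)
  ultimately show ?thesis using step[of k] by simp
qed

lemma norm_power_two_power_less_one: "\<exists>m. norm (a ^ 2 ^ m) < 1"
proof -
  obtain m where m: "norm (res_avg (2 ^ m) 1 - 1) < 1/2"
    using LIMSEQ_D[OF res_avg_dyadic_tendsto[of 1], of "1/2"] res_lim_one by auto
  have i: "invertible_el (1 - a ^ 2 ^ m)" and eq: "res_avg (2 ^ m) 1 = inverse_el (1 - a ^ 2 ^ m)"
    using res_avg_eq_inverse[of "2 ^ m" 1] by auto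
  define u where "u = 1 - res_avg (2 ^ m) 1"
  have nu: "norm u < 1/2" using m by (simp add: u_def norm_minus_commute)
  have "inverse_el (1 - u) = 1 - a ^ 2 ^ m" unfolding u_def using eq inverse_el_inverse_el[OF i] by simp
  moreover have "norm (inverse_el (1 - u) - 1) \<le> norm u / (1 - norm u)"
    by (rule neumann_series(2)) (use nu in auto)
  moreover have "norm u / (1 - norm u) < 1" using nu by (simp add: field_simps)
  ultimately have "norm (a ^ 2 ^ m) < 1" by (simp add: norm_minus_commute)
  then show ?thesis ..
qed

end

context unital_cstar_algebra
begin

lemma norm_less_one_selfadjoint:
  assumes sa: "star a = a" and inv: "\<And>l. cmod l \<le> 1 \<Longrightarrow> invertible_el (1 - cscale l a)"
  shows "norm a < 1"
proof -
  interpret invertible_on_unit_disc star cscale a using inv by unfold_locales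
  obtain m where m: "norm (a ^ 2 ^ m) < 1" using norm_power_two_power_less_one by blast
  have "norm (a ^ 2 ^ k) = norm a ^ 2 ^ k" for k
  proof (induct k)
    case (Suc k)
    have "star (a ^ 2 ^ k) = a ^ 2 ^ k" using sa by (simp add: star_power)
    moreover have "a ^ 2 ^ Suc k = a ^ 2 ^ k * a ^ 2 ^ k" by (simp add: power_add[symmetric] mult_2)
    ultimately have "norm (a ^ 2 ^ Suc k) = (norm (a ^ 2 ^ k))\<^sup>2"
      by (simp add: norm_mult_self_selfadjoint)
    then show ?case using Suc by (simp add: power_mult[symmetric] mult.commute)
  qed simp
  then show ?thesis using m by (metis not_less one_le_power)
qed

lemma norm_le_spectral_bound_selfadjoint:
  assumes sa: "star g = g" and \<rho>: "0 \<le> \<rho>"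
    and spec: "\<And>z. \<not> invertible_el (g - cscale z 1) \<Longrightarrow> cmod z \<le> \<rho>"
  shows "norm g \<le> \<rho>"
proof (rule field_le_epsilon)
  fix e :: real assume e: "0 < e"
  define r where "r = \<rho> + e"
  have r: "r > 0" using \<rho> e by (simp add: r_def)
  have "norm (scaleR (1 / r) g) < 1"
  proof (rule norm_less_one_selfadjoint)
    show "star (scaleR (1 / r) g) = scaleR (1 / r) g" by (simp add: star_scaleR sa)
    fix l :: complex assume l: "cmod l \<le> 1"
    show "invertible_el (1 - cscale l (scaleR (1 / r) g))"
    proof (cases "l = 0")
      case False
      have "r \<le> cmod (of_real r / l)" using False l r by (simp add: norm_divide field_simps mult_left_le)
      then have "invertible_el (g - cscale (of_real r / l) 1)" using spec e unfolding r_def by force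
      moreover have "1 / (of_real r / l) = l / of_real r" by simp
      ultimately show ?thesis using invertible_sub_scalar_iff[of "of_real r / l" g] False r
        by (simp add: scaleR_eq_cscale cscale_assoc[symmetric] divide_inverse of_real_inverse mult.commute)
    qed (simp add: invertible_elI[of 1 1])
  qed
  then show "norm g \<le> \<rho> + e" using r by (simp add: field_simps r_def)
qed

end
section \<open>Positive elements\<close>

context unital_cstar_algebra
begin

abbreviation positive where "positive \<equiv> positive_el star cscale"

lemma positive_selfadjoint: "positive g \<Longrightarrow> star g = g" by (simp add: positive_el_def)

lemma positive_spectrum: "positive g \<Longrightarrow> \<not> invertible_el (g - cscale z 1) \<Longrightarrow> Im z = 0 \<and> 0 \<le> Re z"
  by (simp add: positive_el_def)

lemma norm_shift_le_if_positive:
  assumes p: "positive g" and t: "norm g \<le> t"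
  shows "norm (scaleR t 1 - g) \<le> t"
proof (rule norm_le_spectral_bound_selfadjoint)
  show "star (scaleR t 1 - g) = scaleR t 1 - g" using positive_selfadjoint[OF p] by (simp add: star_diff star_scaleR)
  show "0 \<le> t" using t norm_ge_zero[of g] by linarith
  fix z assume ni: "\<not> invertible_el (scaleR t 1 - g - cscale z 1)"
  have eq: "scaleR t 1 - g - cscale z 1 = - (g - cscale (complex_of_real t - z) 1)"
    by (simp add: cscale_diff_left cscale_of_real)
  have "\<not> invertible_el (g - cscale (complex_of_real t - z) 1)" using ni eq invertible_minus_iff by metis
  then have w: "Im (complex_of_real t - z) = 0 \<and> 0 \<le> Re (complex_of_real t - z)"
    and wb: "cmod (complex_of_real t - z) \<le> norm g"
    using positive_spectrum[OF p] invertible_sub_scalar_if_norm_less not_le by blast+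
  have "Im z = 0" using w by simp
  moreover have "\<bar>Re (complex_of_real t - z)\<bar> \<le> norm g" using wb w cmod_eq_Re by fastforce
  ultimately show "cmod z \<le> t" using w t by (simp add: cmod_eq_Re)
qed

lemma positive_if_norm_shift_le:
  assumes sa: "star g = g" and t: "0 \<le> t" and n: "norm (scaleR t 1 - g) \<le> t"
  shows "positive g"
  unfolding positive_el_def
proof (intro conjI sa allI impI)
  fix z assume ni: "\<not> invertible_el (g - cscale z 1)"
  show iz: "Im z = 0" using invertible_sub_scalar_selfadjoint[OF sa] ni by blast
  show "0 \<le> Re z"
  proof (rule ccontr)
    assume r: "\<not> 0 \<le> Re z"
    have eq: "g - cscale z 1 = - ((scaleR t 1 - g) - cscale (complex_of_real t - z) 1)"
      by (simp add: cscale_diff_left cscale_of_real)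
    have "cmod (complex_of_real t - z) = t - Re z" using iz r t by (simp add: cmod_eq_Re)
    then have "cmod (complex_of_real t - z) > norm (scaleR t 1 - g)" using n r by linarith
    then have "invertible_el ((scaleR t 1 - g) - cscale (complex_of_real t - z) 1)" by (rule invertible_sub_scalar_if_norm_less)
    then have "invertible_el (g - cscale z 1)" unfolding eq invertible_minus_iff .
    then show False using ni by simp
  qed
qed

lemma positive_add:
  assumes "positive g1" "positive g2" shows "positive (g1 + g2)"
proof (rule positive_if_norm_shift_le)
  show "star (g1 + g2) = g1 + g2" using assms by (simp add: star_add positive_selfadjoint)
  show "0 \<le> norm g1 + norm g2" by simp
  have "scaleR (norm g1 + norm g2) 1 - (g1 + g2) = (scaleR (norm g1) 1 - g1) + (scaleR (norm g2) 1 - g2)"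
    by (simp add: scaleR_add_left)
  then have "norm (scaleR (norm g1 + norm g2) 1 - (g1 + g2)) \<le> norm (scaleR (norm g1) 1 - g1) + norm (scaleR (norm g2) 1 - g2)"
    by (metis norm_triangle_ineq)
  also have "\<dots> \<le> norm g1 + norm g2" using norm_shift_le_if_positive assms by (intro add_mono) auto
  finally show "norm (scaleR (norm g1 + norm g2) 1 - (g1 + g2)) \<le> norm g1 + norm g2" .
qed

lemma positive_scaleR:
  assumes p: "positive g" and c: "0 \<le> c" shows "positive (scaleR c g)"
proof (rule positive_if_norm_shift_le)
  show "star (scaleR c g) = scaleR c g" using p by (simp add: star_scaleR positive_selfadjoint)
  show "0 \<le> c * norm g" using c by simp
  have "scaleR (c * norm g) 1 - scaleR c g = scaleR c (scaleR (norm g) 1 - g)"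
    by (simp add: scaleR_diff_right)
  then have "norm (scaleR (c * norm g) 1 - scaleR c g) = c * norm (scaleR (norm g) 1 - g)" using c by simp
  also have "\<dots> \<le> c * norm g" using norm_shift_le_if_positive[OF p] c by (intro mult_left_mono) auto
  finally show "norm (scaleR (c * norm g) 1 - scaleR c g) \<le> c * norm g" .
qed

lemma positive_mult_self_selfadjoint:
  assumes sa: "star h = h" shows "positive (h * h)"
  unfolding positive_el_def
proof (intro conjI allI impI)
  show "star (h * h) = h * h" by (simp add: star_mult sa)
  fix z assume ni: "\<not> invertible_el (h * h - cscale z 1)"
  define v where "v = csqrt z"
  have vz: "v * v = z" unfolding v_def by (metis power2_csqrt power2_eq_square)
  have "(h - cscale v 1) * (h - cscale (- v) 1)
      = h * h - h * cscale (- v) 1 - cscale v 1 * h + cscale v 1 * cscale (- v) 1"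
    by (simp add: algebra_simps)
  also have "\<dots> = h * h - cscale (- v) h - cscale v h + cscale (v * (- v)) 1"
    by (simp add: cscale_one_mult mult_cscale_one cscale_mult cscale_assoc[symmetric])
  also have "\<dots> = h * h - cscale z 1"
    by (simp add: cscale_minus_left vz[symmetric])
  finally have eq: "h * h - cscale z 1 = (h - cscale v 1) * (h - cscale (- v) 1)" by simp
  have "Im v = 0"
  proof (rule ccontr)
    assume "Im v \<noteq> 0"
    then have "invertible_el (h - cscale v 1)" "invertible_el (h - cscale (- v) 1)"
      using invertible_sub_scalar_selfadjoint[OF sa] by auto
    then have "invertible_el (h * h - cscale z 1)" unfolding eq by (rule invertible_mult)
    then show False using ni by simp
  qed
  then have "z = complex_of_real ((Re v)^2)" using vz by (simp add: complex_eq_iff power2_eq_square)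
  then show "Im z = 0" "0 \<le> Re z" by simp_all
qed

lemma positive_zero: "positive 0"
  by (rule positive_if_norm_shift_le) auto

lemma star_inverse_el:
  assumes "invertible_el x" shows "star (inverse_el x) = inverse_el (star x)"
proof (rule inverse_el_unique[symmetric])
  show "star x * star (inverse_el x) = 1" "star (inverse_el x) * star x = 1"
    using inverse_el_cancel[OF assms] by (metis star_mult star_one)+
qed

lemma positive_one: "positive 1"
  using positive_mult_self_selfadjoint[of 1] by simp

lemma positive_inverse_el:
  assumes n: "positive n" and i: "invertible_el n"
  shows "positive (inverse_el n)"
proof -
  have "Im c = 0 \<and> 0 \<le> Re c" if ni: "\<not> invertible_el (inverse_el n - cscale c 1)" for c
  proof (rule ccontr)
    assume nc: "\<not> (Im c = 0 \<and> 0 \<le> Re c)"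
    then have c: "c \<noteq> 0" by auto
    have "\<not> (Im (1/c) = 0 \<and> 0 \<le> Re (1/c))"
      using nc c by (auto simp: Im_divide Re_divide zero_le_divide_iff complex_eq_iff)
    then have "invertible_el (n - cscale (1/c) 1)" using positive_spectrum[OF n] by blast
    then have "invertible_el (inverse_el n * cscale (- c) (n - cscale (1/c) 1))"
      using c invertible_inverse_el[OF i] by (intro invertible_mult(1) invertible_cscale) auto
    also have "inverse_el n * cscale (- c) (n - cscale (1/c) 1)
        = cscale (- c) (inverse_el n * n) - cscale (- c * (1/c)) (inverse_el n)"
      by (simp add: cscale_mult_right cscale_diff_right mult_cscale_one cscale_assoc[symmetric] right_diff_distrib)
    also have "\<dots> = inverse_el n - cscale c 1"
      using inverse_el_cancel(2)[OF i] c by (simp add: cscale_minus_left)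
    finally show False using ni by simp
  qed
  moreover have "star (inverse_el n) = inverse_el n"
    using star_inverse_el[OF i] positive_selfadjoint[OF n] by simp
  ultimately show ?thesis unfolding positive_el_def by blast
qed

text \<open>For c \<noteq> 0: (x - c)(y - c) = -c (r - c), and the two factors commute.\<close>

lemma positive_orthogonal_summand:
  assumes r: "positive r" and x: "star x = x"
    and xy: "x * y = 0" "y * x = 0" and sum: "x + y = r"
  shows "positive x"
  unfolding positive_el_def
proof (rule conjI[OF x], intro allI impI)
  fix c assume ni: "\<not> invertible_el (x - cscale c 1)"
  show "Im c = 0 \<and> 0 \<le> Re c"
  proof (rule ccontr)
    assume nc: "\<not> (Im c = 0 \<and> 0 \<le> Re c)"
    then have c: "c \<noteq> 0" by auto
    have expand: "(u - cscale c 1) * (v - cscale c 1) = u * v - cscale c (u + v) + cscale (c * c) 1" for u v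
    proof -
      have "(u - cscale c 1) * (v - cscale c 1) = u * v - (u * cscale c 1 + cscale c 1 * v) + cscale c 1 * cscale c 1"
        by (simp add: algebra_simps)
      then show ?thesis by (simp add: mult_cscale_one cscale_one_mult cscale_add_right cscale_assoc)
    qed
    have "(y - cscale c 1) * (x - cscale c 1) = cscale (- c) (r - cscale c 1)"
      unfolding expand xy sum[symmetric] add.commute[of y]
      by (simp add: cscale_diff_right cscale_minus_left cscale_assoc[symmetric])
    moreover have "(x - cscale c 1) * (y - cscale c 1) = (y - cscale c 1) * (x - cscale c 1)"
      unfolding expand xy by (simp add: add.commute)
    moreover have "invertible_el (cscale (- c) (r - cscale c 1))"
      using positive_spectrum[OF r] nc c by (intro invertible_cscale) auto
    ultimately have "invertible_el (x - cscale c 1)" by (metis invertible_commuting_factor)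
    then show False using ni by simp
  qed
qed

text \<open>z z* + z* z = 2 h^2 + k^2 / 2 for the real and imaginary parts h, k of z.\<close>

lemma positive_mult_star_add_star_mult: "positive (z * star z + star z * z)"
proof -
  define h where "h = scaleR (1/2) (z + star z)"
  define k where "k = cscale (- \<i>) (z - star z)"
  have sah: "star h = h" by (simp add: h_def star_scaleR star_add star_star add.commute)
  have sak: "star k = k"
    by (simp add: k_def star_cscale star_diff star_star cscale_diff_right cscale_minus_left)
  have hh: "h * h = scaleR (1/4) ((z + star z) * (z + star z))"
    by (simp add: h_def)
  have kk: "k * k = - ((z - star z) * (z - star z))"
    by (simp add: k_def cscale_mult cscale_minus_left)
  have "z * star z + star z * z = scaleR 2 (h * h) + scaleR (1/2) (k * k)"
    unfolding hh kk by (simp add: algebra_simps scaleR_add_right scaleR_diff_right flip: scaleR_2)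
  then show ?thesis
    by (metis positive_add positive_scaleR positive_mult_self_selfadjoint sah sak zero_le_divide_1_iff
        zero_le_numeral zero_le_one)
qed

text \<open>Away from 0 the spectra of z* z and z z* = (z z* + z* z) + g agree, so the spectrum of
  z* z = -g is {0}.\<close>

lemma star_mult_self_eq_neg_positive:
  assumes p: "positive g" and zg: "star z * z = - g"
  shows "z = 0"
proof -
  have "z * star z = (z * star z + star z * z) + g" using zg by simp
  then have pzz: "positive (z * star z)"
    by (metis positive_add[OF positive_mult_star_add_star_mult p])
  have sa: "star (star z * z) = star z * z" by (simp add: star_mult star_star)
  have "norm (star z * z) \<le> 0"
  proof (rule norm_le_spectral_bound_selfadjoint[OF sa])
    fix mu assume ni: "\<not> invertible_el (star z * z - cscale mu 1)"
    show "cmod mu \<le> 0"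
    proof (rule ccontr)
      assume "\<not> cmod mu \<le> 0"
      then have mu: "mu \<noteq> 0" by auto
      show False
      proof (cases "Im mu = 0 \<and> 0 \<le> Re mu")
        case True
        then have re: "0 < Re mu" using mu by (simp add: complex_eq_iff)
        have "star z * z - cscale mu 1 = - (g - cscale (- mu) 1)" using zg by (simp add: cscale_minus_left)
        moreover have "invertible_el (g - cscale (- mu) 1)" using positive_spectrum[OF p, of "- mu"] re by auto
        ultimately show False using ni invertible_minus_iff by metis
      next
        case False
        then have "invertible_el (z * star z - cscale mu 1)" using positive_spectrum[OF pzz] by blast
        then have "invertible_el (star z * z - cscale mu 1)" by (rule invertible_sub_scalar_swap[OF mu])
        then show False using ni by simp
      qed
    qed
  qed simp
  then have "norm (star z * z) = 0" by simp
  then show ?thesis using cstar_identity[of z] by simp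
qed

end

section \<open>Square roots\<close>

text \<open>Taylor coefficients of sqrt(1 - x).\<close>

definition sqrt_coeff :: "nat \<Rightarrow> real" where
  "sqrt_coeff n = pochhammer (-1/2) n / fact n"

lemma sqrt_coeff_eq_gbinomial: "sqrt_coeff n = ((1/2) gchoose n) * (-1)^n"
proof -
  have "((1/2::real) gchoose n) * (-1)^n = ((-1)^n * (-1)^n) * pochhammer (-1/2) n / fact n"
    by (simp add: gbinomial_pochhammer)
  also have "(-1::real)^n * (-1)^n = 1" by (simp add: power_mult_distrib[symmetric])
  finally show ?thesis by (simp add: sqrt_coeff_def)
qed

lemma sqrt_coeff_0[simp]: "sqrt_coeff 0 = 1" by (simp add: sqrt_coeff_def)

lemma sqrt_coeff_Suc_nonpos: "sqrt_coeff (Suc n) \<le> 0"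
proof -
  have "pochhammer (-1/2::real) (Suc n) = (-1/2) * pochhammer (1/2) n" by (simp add: pochhammer_rec)
  moreover have "pochhammer (1/2::real) n > 0" by (rule pochhammer_pos) simp
  ultimately have "pochhammer (-1/2::real) (Suc n) < 0" by simp
  then show ?thesis unfolding sqrt_coeff_def by (simp add: divide_nonpos_pos)
qed

lemma sum_sqrt_coeff_nonneg: "0 \<le> (\<Sum>k\<le>N. sqrt_coeff k)"
proof -
  have "(\<Sum>k\<le>N. sqrt_coeff k) = (\<Sum>k\<le>N. ((1/2::real) gchoose k) * (-1)^k)" by (simp add: sqrt_coeff_eq_gbinomial)
  also have "\<dots> = (-1)^N * ((1/2 - 1) gchoose N)" by (rule gbinomial_sum_lower_neg)
  also have "((1/2 - 1::real) gchoose N) = (-1)^N * pochhammer (1/2) N / fact N"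
    by (simp add: gbinomial_pochhammer)
  finally have "(\<Sum>k\<le>N. sqrt_coeff k) = ((-1)^N * (-1)^N) * pochhammer (1/2::real) N / fact N" by simp
  also have "(-1::real)^N * (-1)^N = 1" by (simp add: power_mult_distrib[symmetric])
  finally show ?thesis by (simp add: pochhammer_pos less_imp_le)
qed

lemma sum_abs_sqrt_coeff_Suc: "(\<Sum>n<N. \<bar>sqrt_coeff (Suc n)\<bar>) = 1 - (\<Sum>k\<le>N. sqrt_coeff k)"
proof -
  have a: "\<bar>sqrt_coeff (Suc n)\<bar> = - sqrt_coeff (Suc n)" for n using sqrt_coeff_Suc_nonpos[of n] by simp
  have "(\<Sum>n<N. \<bar>sqrt_coeff (Suc n)\<bar>) = - (\<Sum>n<N. sqrt_coeff (Suc n))"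
    by (simp add: a sum_negf)
  moreover have "(\<Sum>k\<le>N. sqrt_coeff k) = sqrt_coeff 0 + (\<Sum>n<N. sqrt_coeff (Suc n))"
    by (simp only: lessThan_Suc_atMost[symmetric] sum.lessThan_Suc_shift sqrt_coeff_0)
  ultimately show ?thesis by simp
qed

lemma summable_abs_sqrt_coeff_Suc: "summable (\<lambda>n. \<bar>sqrt_coeff (Suc n)\<bar>)"
proof (rule bounded_imp_summable[where B=1])
  fix n
  have "(\<Sum>k\<le>n. \<bar>sqrt_coeff (Suc k)\<bar>) \<le> (\<Sum>k<Suc n. \<bar>sqrt_coeff (Suc k)\<bar>)" by (simp add: lessThan_Suc_atMost)
  also have "\<dots> \<le> 1" using sum_abs_sqrt_coeff_Suc[of "Suc n"] sum_sqrt_coeff_nonneg[of "Suc n"] by simp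
  finally show "(\<Sum>k\<le>n. \<bar>sqrt_coeff (Suc k)\<bar>) \<le> 1" .
qed simp

lemma suminf_abs_sqrt_coeff_Suc_le_one: "(\<Sum>n. \<bar>sqrt_coeff (Suc n)\<bar>) \<le> 1"
  by (rule suminf_le_const[OF summable_abs_sqrt_coeff_Suc]) (use sum_abs_sqrt_coeff_Suc sum_sqrt_coeff_nonneg in auto)

lemma summable_abs_sqrt_coeff: "summable (\<lambda>n. \<bar>sqrt_coeff n\<bar>)"
  using summable_abs_sqrt_coeff_Suc summable_Suc_iff by blast

lemma sqrt_coeff_convolution: "(\<Sum>i\<le>k. sqrt_coeff i * sqrt_coeff (k - i)) = (if k = 0 then 1 else if k = 1 then -1 else 0)"
proof -
  have "(\<Sum>i\<le>k. sqrt_coeff i * sqrt_coeff (k - i)) = (\<Sum>i\<le>k. ((1/2::real) gchoose i) * ((1/2) gchoose (k - i)) * (-1)^k)"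
  proof (intro sum.cong refl)
    fix i assume "i \<in> {..k}"
    then have "(-1::real)^i * (-1)^(k-i) = (-1)^k" by (simp add: power_add[symmetric])
    moreover have "sqrt_coeff i * sqrt_coeff (k - i) = (((1/2::real) gchoose i) * ((1/2) gchoose (k - i))) * ((-1::real)^i * (-1)^(k-i))"
      by (simp only: sqrt_coeff_eq_gbinomial mult_ac)
    ultimately show "sqrt_coeff i * sqrt_coeff (k - i) = ((1/2::real) gchoose i) * ((1/2) gchoose (k - i)) * (-1)^k"
      by simp
  qed
  also have "\<dots> = (\<Sum>i\<le>k. ((1/2::real) gchoose i) * ((1/2) gchoose (k - i))) * (-1)^k"
    by (simp add: sum_distrib_right)
  also have "(\<Sum>i\<le>k. ((1/2::real) gchoose i) * ((1/2) gchoose (k - i))) = (1/2 + 1/2) gchoose k"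
    using gbinomial_Vandermonde[of "1/2::real" "1/2" k] by (simp add: atLeast0AtMost)
  also have "(1/2 + 1/2::real) gchoose k = of_nat (1 choose k)" 
  proof -
    have "(1/2 + 1/2::real) = of_nat 1" by simp
    then show ?thesis by (simp only: binomial_gbinomial)
  qed
  finally show ?thesis
    by (cases k) (auto simp: binomial_eq_0)
qed

definition sqrt_one_minus :: "'a::{real_normed_algebra_1, banach} \<Rightarrow> 'a" where
  "sqrt_one_minus u = (\<Sum>n. sqrt_coeff n *\<^sub>R u ^ n)"

lemma summable_norm_sqrt_one_minus:
  fixes u :: "'a::{real_normed_algebra_1, banach}"
  assumes "norm u \<le> 1"
  shows "summable (\<lambda>n. norm (sqrt_coeff n *\<^sub>R u ^ n))"
    and "norm (sqrt_coeff n *\<^sub>R u ^ n) \<le> \<bar>sqrt_coeff n\<bar>"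
proof -
  have "norm (u ^ m) \<le> 1" for m
    using norm_power_ineq[of u m] power_le_one[OF norm_ge_zero assms, of m] by linarith
  then show bound: "norm (sqrt_coeff m *\<^sub>R u ^ m) \<le> \<bar>sqrt_coeff m\<bar>" for m
    using mult_left_mono[of "norm (u ^ m)" 1 "\<bar>sqrt_coeff m\<bar>"] by simp
  show "summable (\<lambda>n. norm (sqrt_coeff n *\<^sub>R u ^ n))"
    by (rule summable_comparison_test[OF _ summable_abs_sqrt_coeff]) (use bound in auto)
qed

lemma sqrt_one_minus_square:
  fixes u :: "'a::{real_normed_algebra_1, banach}"
  assumes u: "norm u \<le> 1"
  shows "sqrt_one_minus u * sqrt_one_minus u = 1 - u"
proof -
  let ?f = "\<lambda>n. sqrt_coeff n *\<^sub>R u ^ n"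
  have f: "?f i * ?f (k - i) = (sqrt_coeff i * sqrt_coeff (k - i)) *\<^sub>R u ^ k" if "i \<le> k" for i k
  proof -
    have "u ^ i * u ^ (k - i) = u ^ k" using that by (simp add: power_add[symmetric])
    then show ?thesis by (simp only: mult_scaleR_left mult_scaleR_right scaleR_scaleR mult.commute)
  qed
  have "sqrt_one_minus u * sqrt_one_minus u = (\<Sum>k. \<Sum>i\<le>k. ?f i * ?f (k - i))"
    unfolding sqrt_one_minus_def
    by (rule Cauchy_product[OF summable_norm_sqrt_one_minus(1)[OF u] summable_norm_sqrt_one_minus(1)[OF u]])
  also have "\<dots> = (\<Sum>k. (\<Sum>i\<le>k. sqrt_coeff i * sqrt_coeff (k - i)) *\<^sub>R u ^ k)"
  proof (intro suminf_cong)
    fix k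
    have "(\<Sum>i\<le>k. ?f i * ?f (k - i)) = (\<Sum>i\<le>k. (sqrt_coeff i * sqrt_coeff (k - i)) *\<^sub>R u ^ k)"
      using f by (intro sum.cong refl) auto
    then show "(\<Sum>i\<le>k. ?f i * ?f (k - i)) = (\<Sum>i\<le>k. sqrt_coeff i * sqrt_coeff (k - i)) *\<^sub>R u ^ k"
      by (simp add: scaleR_sum_left)
  qed
  also have "\<dots> = (\<Sum>k\<in>{0,1}. (\<Sum>i\<le>k. sqrt_coeff i * sqrt_coeff (k - i)) *\<^sub>R u ^ k)"
    by (rule suminf_finite) (simp_all add: sqrt_coeff_convolution)
  also have "\<dots> = 1 - u" by (simp add: sqrt_coeff_convolution scaleR_minus_left)
  finally show ?thesis .
qed

lemma norm_one_minus_sqrt_one_minus: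
  fixes u :: "'a::{real_normed_algebra_1, banach}"
  assumes u: "norm u \<le> 1"
  shows "norm (1 - sqrt_one_minus u) \<le> 1"
proof -
  let ?f = "\<lambda>n. sqrt_coeff n *\<^sub>R u ^ n"
  have sn1: "summable (\<lambda>n. norm (?f (Suc n)))"
    using summable_norm_sqrt_one_minus(1)[OF u] by (subst summable_Suc_iff)
  have "1 - sqrt_one_minus u = - (\<Sum>n. ?f (Suc n))"
    using suminf_split_head[OF summable_norm_cancel[OF summable_norm_sqrt_one_minus(1)[OF u]]]
    by (simp add: sqrt_one_minus_def)
  then have "norm (1 - sqrt_one_minus u) \<le> (\<Sum>n. norm (?f (Suc n)))"
    using summable_norm[OF sn1] by simp
  also have "\<dots> \<le> (\<Sum>n. \<bar>sqrt_coeff (Suc n)\<bar>)"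
    by (rule suminf_le[OF _ sn1 summable_abs_sqrt_coeff_Suc]) (rule summable_norm_sqrt_one_minus(2)[OF u])
  also have "\<dots> \<le> 1" by (rule suminf_abs_sqrt_coeff_Suc_le_one)
  finally show ?thesis .
qed

lemma sqrt_one_minus_commute:
  fixes u :: "'a::{real_normed_algebra_1, banach}"
  assumes u: "norm u \<le> 1" and yu: "y * u = u * y"
  shows "y * sqrt_one_minus u = sqrt_one_minus u * y"
proof -
  let ?f = "\<lambda>n. sqrt_coeff n *\<^sub>R u ^ n"
  have s: "summable ?f" by (rule summable_norm_cancel[OF summable_norm_sqrt_one_minus(1)[OF u]])
  have "y * u ^ n = u ^ n * y" for n
    by (induct n) (simp_all add: mult.assoc[symmetric] yu, simp add: mult.assoc)
  then have "(\<Sum>n. y * ?f n) = (\<Sum>n. ?f n * y)" by simp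
  then show ?thesis unfolding sqrt_one_minus_def suminf_mult[OF s, symmetric] suminf_mult2[OF s] .
qed

context unital_cstar_algebra
begin

lemma star_sqrt_one_minus:
  assumes "norm u \<le> 1" "star u = u"
  shows "star (sqrt_one_minus u) = sqrt_one_minus u"
  unfolding sqrt_one_minus_def
  using star_suminf[OF summable_norm_cancel[OF summable_norm_sqrt_one_minus(1)[OF assms(1)]]]
  by (simp add: star_scaleR star_power assms(2))

text \<open>The square root is sqrt t sqrt_one_minus (1 - g / t), for t = \<parallel>g\<parallel>.\<close>

lemma positive_sqrt:
  assumes p: "positive g"
  shows "\<exists>s. star s = s \<and> s * s = g \<and> positive s \<and> (\<forall>y. y * g = g * y \<longrightarrow> y * s = s * y)"
proof (cases "g = 0")
  case True
  then show ?thesis by (intro exI[of _ 0]) (auto simp: positive_zero)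
next
  case False
  define t where "t = norm g"
  have t: "t > 0" using False by (simp add: t_def)
  define u where "u = 1 - scaleR (1/t) g"
  have "u = scaleR (1/t) (scaleR t 1 - g)" using t by (simp add: u_def scaleR_diff_right)
  then have "norm u = (1/t) * norm (scaleR t 1 - g)" using t by simp
  also have "\<dots> \<le> (1/t) * t"
    using norm_shift_le_if_positive[OF p, of t] t by (intro mult_left_mono) (auto simp: t_def)
  finally have u: "norm u \<le> 1" using t by simp
  define s where "s = scaleR (sqrt t) (sqrt_one_minus u)"
  have "star s = s"
    using star_sqrt_one_minus[OF u] positive_selfadjoint[OF p] by (simp add: s_def u_def star_diff star_scaleR)
  moreover have "s * s = g"
    using sqrt_one_minus_square[OF u] t by (simp add: s_def u_def)
  moreover have "positive s"
  proof (rule positive_if_norm_shift_le[OF \<open>star s = s\<close>])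
    have "norm (scaleR (sqrt t) 1 - s) = sqrt t * norm (1 - sqrt_one_minus u)"
      using t by (simp add: s_def flip: scaleR_diff_right)
    also have "\<dots> \<le> sqrt t" using norm_one_minus_sqrt_one_minus[OF u] t by (simp add: mult_left_le)
    finally show "norm (scaleR (sqrt t) 1 - s) \<le> sqrt t" .
  qed (use t in simp)
  moreover have "y * s = s * y" if "y * g = g * y" for y
    using sqrt_one_minus_commute[OF u, of y] that by (simp add: s_def u_def algebra_simps)
  ultimately show ?thesis by blast
qed

end

section \<open>Positivity of z* z\<close>

context unital_cstar_algebra
begin

lemma selfadjoint_positive_parts:
  assumes sa: "star h = h"
  obtains hp hm where "positive hp" "positive hm" "hp * hm = 0" "hm * hp = 0" "hp - hm = h"
proof -
  obtain r where sar: "star r = r" and rr: "r * r = h * h" and r: "positive r"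
    and rc: "\<And>y. y * (h * h) = (h * h) * y \<Longrightarrow> y * r = r * y"
    using positive_sqrt[OF positive_mult_self_selfadjoint[OF sa]] by blast
  have hr: "h * r = r * h" by (rule rc) (simp add: mult.assoc)
  define hp where "hp = scaleR (1/2) (r + h)"
  define hm where "hm = scaleR (1/2) (r - h)"
  have "(r + h) * (r - h) = (r * r - h * h) + (h * r - r * h)"
    "(r - h) * (r + h) = (r * r - h * h) + (r * h - h * r)" by (simp_all add: algebra_simps)
  then have orth: "hp * hm = 0" "hm * hp = 0" unfolding hp_def hm_def using rr hr by simp_all
  have "hp + hm = scaleR (1/2) ((r + h) + (r - h))" "hp - hm = scaleR (1/2) ((r + h) - (r - h))"
    unfolding hp_def hm_def by (simp_all only: scaleR_add_right scaleR_diff_right)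
  then have sum: "hp + hm = r" "hm + hp = r" and diff: "hp - hm = h"
    by (simp_all add: add.commute flip: scaleR_2)
  have "star hp = hp" "star hm = hm" by (simp_all add: hp_def hm_def star_scaleR star_add star_diff sar sa)
  then have "positive hp" "positive hm"
    using positive_orthogonal_summand[OF r] orth sum by blast+
  then show thesis using that orth diff by blast
qed

lemma selfadjoint_cube_eq_zero:
  assumes sa: "star x = x" and "x * x * x = 0" shows "x = 0"
proof -
  have "(x * x) * (x * x) = x * (x * x * x)" by (simp add: mult.assoc)
  then have "norm ((x * x) * (x * x)) = 0" using assms(2) by simp
  then have "norm (x * x) = 0" using norm_mult_self_selfadjoint[of "x * x"] sa by (simp add: star_mult)
  then show ?thesis using norm_mult_self_selfadjoint[OF sa] by simp
qed

text \<open>If h = z* z = hp - hm, then w = z hm has w* w = -hm^3 with hm^3 positive, so w = 0 and hm = 0.\<close>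

lemma positive_star_mult_self: "positive (star z * z)"
proof -
  have sah: "star (star z * z) = star z * z" by (simp add: star_mult star_star)
  obtain hp hm where hp: "positive hp" and hm: "positive hm" and orth: "hm * hp = 0"
    and diff: "hp - hm = star z * z"
    using selfadjoint_positive_parts[OF sah] by metis
  have sahm: "star hm = hm" using hm by (rule positive_selfadjoint)
  obtain s where sas: "star s = s" and ss: "s * s = hm" using positive_sqrt[OF hm] by blast
  have "hm * hm * hm = (s * s * s) * (s * s * s)" by (simp add: ss[symmetric] mult.assoc)
  then have pos3: "positive (hm * hm * hm)"
    using positive_mult_self_selfadjoint[of "s * s * s"] by (simp add: star_mult sas mult.assoc)
  have "star (z * hm) * (z * hm) = hm * (hp - hm) * hm" by (simp add: star_mult sahm diff mult.assoc)
  also have "\<dots> = hm * hp * hm - hm * hm * hm" by (simp only: left_diff_distrib right_diff_distrib)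
  also have "\<dots> = - (hm * hm * hm)" by (simp add: orth)
  finally have w: "star (z * hm) * (z * hm) = - (hm * hm * hm)" .
  then have "z * hm = 0" by (rule star_mult_self_eq_neg_positive[OF pos3])
  then have "hm * hm * hm = 0" using w by simp
  then have "hm = 0" by (rule selfadjoint_cube_eq_zero[OF sahm])
  then show ?thesis using hp diff by simp
qed

text \<open>With s = sqrt(P - p), c = p (1 - P) and d = s (1 - P) one has d* d = -(c* c).\<close>

lemma proj_le_imp_mult_eq:
  assumes P: "is_proj star P" and p: "is_proj star p" and le: "positive (P - p)"
  shows "P * p = p" "p * P = p"
proof -
  have PP: "P * P = P" "star P = P" and pp: "p * p = p" "star p = p" using P p by (auto simp: is_proj_def)
  obtain s where sas: "star s = s" and ss: "s * s = P - p" using positive_sqrt[OF le] by blast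
  define d where "d = s * (1 - P)"
  define c where "c = p * (1 - P)"
  have sd: "star d = (1 - P) * s" by (simp add: d_def star_mult star_diff PP sas)
  have "star d * d = (1 - P) * (s * s) * (1 - P)" unfolding sd by (simp only: d_def mult.assoc)
  also have "\<dots> = (1 - P) * (P - p) * (1 - P)" by (simp only: ss)
  also have "(1 - P) * (P - p) = - ((1 - P) * p)"
  proof -
    have "(1 - P) * P = 0" by (simp add: left_diff_distrib PP)
    then show ?thesis by (simp add: right_diff_distrib)
  qed
  finally have dd: "star d * d = - ((1 - P) * p * (1 - P))" by simp
  have sc: "star c = (1 - P) * p" by (simp add: c_def star_mult star_diff PP pp)
  have "star c * c = (1 - P) * (p * p) * (1 - P)" unfolding sc by (simp only: c_def mult.assoc)
  then have cc: "star c * c = (1 - P) * p * (1 - P)" by (simp only: pp)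
  have "star c * c = - (star d * d)" using dd cc by simp
  then have "c = 0" by (rule star_mult_self_eq_neg_positive[OF positive_star_mult_self])
  then show pP: "p * P = p" by (simp add: c_def algebra_simps)
  have "star (p * P) = star p" using pP by simp
  then show "P * p = p" by (simp add: star_mult PP pp)
qed

end
section \<open>Range projections\<close>

context unital_cstar_algebra
begin

text \<open>n = 1 + w* w with w = sqrt(K - b* b) x and K = \<parallel>b\<parallel>^2 + 1.\<close>

lemma star_mult_self_corner_factor:
  assumes e: "is_proj star e" and xe: "x * e = x" and bx: "b * x = e"
  obtains K n where "K > 0" "positive n" "invertible_el n" "e * n = n * e"
    "scaleR K (star x * x) = e * n"
proof -
  have ee: "e * e = e" and se: "star e = e" using e by (auto simp: is_proj_def)
  define K where "K = (norm b)\<^sup>2 + 1"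
  have K: "K > 0" by (simp add: K_def add_nonneg_pos)
  have "positive (scaleR K 1 - star b * b)"
    by (rule positive_if_norm_shift_le[where t = K]) (use K in \<open>simp_all add: star_diff star_scaleR star_mult
        star_star cstar_identity K_def\<close>)
  then obtain s where ss: "star s = s" "s * s = scaleR K 1 - star b * b" using positive_sqrt by blast
  define w where "w = s * x"
  have "star w * w = star x * (s * s) * x" by (simp add: w_def star_mult ss(1) mult.assoc)
  also have "\<dots> = scaleR K (star x * x) - star (b * x) * (b * x)"
    by (simp add: ss(2) algebra_simps star_mult)
  finally have ww: "star w * w = scaleR K (star x * x) - e" by (simp add: bx se ee)
  have esw: "e * star w = star w" using xe by (metis se star_mult w_def mult.assoc)
  have we: "w * e = w" by (simp add: w_def mult.assoc xe)
  define n where "n = 1 + star w * w"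
  have "positive n" unfolding n_def by (intro positive_add positive_one positive_star_mult_self)
  moreover have "invertible_el n"
    using positive_spectrum[OF positive_star_mult_self, of w "-1"] by (auto simp: n_def cscale_minus_left add.commute)
  moreover have "e * n = n * e" by (simp add: n_def algebra_simps mult.assoc[symmetric] esw we)
  moreover have "scaleR K (star x * x) = e * n"
    using ww by (simp add: n_def algebra_simps mult.assoc[symmetric] esw)
  ultimately show thesis using that K by blast
qed

text \<open>t = sqrt K e sqrt(n\<inverse>), with K and n from the previous lemma.\<close>

lemma corner_inverse_sqrt:
  assumes e: "is_proj star e" and xe: "x * e = x" and bx: "b * x = e"
  obtains t where "star t = t" "t * e = t" "t * (star x * x) * t = e" "x * (t * t) * (star x * x) = x"
proof -
  have ee: "e * e = e" and se: "star e = e" using e by (auto simp: is_proj_def)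
  obtain K n where K: "K > 0" and n: "positive n" "invertible_el n" and en: "e * n = n * e"
    and Kx: "scaleR K (star x * x) = e * n"
    using star_mult_self_corner_factor[OF e xe bx] by blast
  define m where "m = inverse_el n"
  have mn: "m * n = 1" "n * m = 1" using inverse_el_cancel[OF n(2)] by (auto simp: m_def)
  have em: "e * m = m * e" unfolding m_def by (rule inverse_el_commute[OF n(2) en])
  obtain r where sr: "star r = r" and rr: "r * r = m" and rc: "\<And>y. y * m = m * y \<Longrightarrow> y * r = r * y"
    using positive_sqrt[OF positive_inverse_el[OF n]] unfolding m_def[symmetric] by blast
  have er: "e * r = r * e" using rc em by blast
  have nr: "n * r = r * n" using rc mn by metis
  have N: "r * e = e * r" "r * (e * z) = e * (r * z)" "n * e = e * n" "n * (e * z) = e * (n * z)"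
    "n * r = r * n" "n * (r * z) = r * (n * z)" "e * (e * z) = e * z" "r * (r * z) = m * z" "m * (n * z) = z"
    "m * e = e * m" "m * (e * z) = e * (m * z)" for z
    using er en nr ee rr mn em by (auto simp: mult.assoc[symmetric])
  define t where "t = scaleR (sqrt K) (e * r)"
  have xx: "star x * x * e = star x * x" by (simp add: mult.assoc xe)
  show thesis
  proof
    show "star t = t" by (simp add: t_def star_scaleR star_mult se sr er)
    show "t * e = t" by (simp add: t_def mult.assoc N ee)
    have "t * (star x * x) * t = (e * r) * (scaleR K (star x * x)) * (e * r)"
      using K by (simp add: t_def)
    also have "\<dots> = e" by (simp add: Kx mult.assoc N ee mn)
    finally show "t * (star x * x) * t = e" .
    have "x * (t * t) * (star x * x) = x * ((e * m) * (scaleR K (star x * x)))"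
      using K by (simp add: t_def mult.assoc N)
    also have "\<dots> = x" by (simp add: Kx mult.assoc N ee mn xe)
    finally show "x * (t * t) * (star x * x) = x" .
  qed
qed

text \<open>The range projection of x is v v* for the partial isometry v = x t.\<close>

lemma range_projection:
  assumes e: "is_proj star e" and xe: "x * e = x" and bx: "b * x = e"
  obtains \<tau> where "is_proj star (x * \<tau> * star x)" "proj_equiv star (x * \<tau> * star x) e"
    "x * \<tau> * star x * x = x"
proof -
  obtain t where t_sa: "star t = t" and t_e: "t * e = t" and t_corner: "t * (star x * x) * t = e"
    and t_range: "x * (t * t) * (star x * x) = x"
    using corner_inverse_sqrt[OF e xe bx] by blast
  define v where "v = x * t"
  have r: "x * (t * t) * star x = v * star v" by (simp add: v_def star_mult t_sa mult.assoc)
  have vv: "star v * v = e" using t_corner by (simp add: v_def star_mult t_sa mult.assoc)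
  have ve: "v * e = v" by (simp add: v_def mult.assoc t_e)
  show thesis
  proof
    have "v * star v * (v * star v) = v * (star v * v) * star v" by (simp add: mult.assoc)
    then have "v * star v * (v * star v) = v * star v" by (simp add: vv ve)
    then show "is_proj star (x * (t * t) * star x)" unfolding r by (simp add: is_proj_def star_mult star_star)
    show "proj_equiv star (x * (t * t) * star x) e" unfolding r proj_equiv_def using vv by blast
    show "x * (t * t) * star x * x = x" using t_range by (simp add: mult.assoc)
  qed
qed

end
section \<open>Enlarging the projections\<close>

locale block_triangular = unital_cstar_algebra +
  fixes a p q b :: 'a
  assumes proj_p: "is_proj star p" and proj_q: "is_proj star q"
    and b_corner: "b = (1 - p) * b * (1 - q)"
    and b_right_inverse: "(1 - q) * a * (1 - p) * b = 1 - q"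
    and b_left_inverse: "b * (1 - q) * a * (1 - p) = 1 - p"
    and triangular: "q * a * (1 - p) = 0"
begin

abbreviation a_corner :: 'a where
  "a_corner \<equiv> (1 - q) * a * (1 - p)"

lemma b_mult_one_minus_q: "b * (1 - q) = b"
proof -
  have "b * (1 - q) = (1 - p) * b * ((1 - q) * (1 - q))" by (subst b_corner) (simp add: mult.assoc)
  also have "(1 - q) * (1 - q) = 1 - q" using proj_q by (simp add: algebra_simps is_proj_def)
  finally show ?thesis using b_corner by simp
qed

end

locale block_triangular_extension = block_triangular +
  fixes P :: 'a
  assumes proj_P: "is_proj star P" and p_le_P: "p * P = p"
begin

lemma P_mult_p: "P * p = p"
  using arg_cong[OF p_le_P, of star] proj_p proj_P by (simp add: star_mult is_proj_def)

lemma one_minus_p_mult_diff: "(1 - p) * (P - p) = P - p"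
  using proj_p p_le_P by (simp add: right_diff_distrib left_diff_distrib is_proj_def)

lemma is_proj_diff: "is_proj star (P - p)"
  using proj_p proj_P p_le_P P_mult_p by (simp add: is_proj_def algebra_simps star_diff)

lemma q_mult_range: "q * (a * (P - p)) = 0"
  using triangular by (metis one_minus_p_mult_diff mult.assoc mult_zero_left)

lemma a_corner_mult_diff: "a_corner * (P - p) = a * (P - p)"
proof -
  have "a_corner * (P - p) = (1 - q) * (a * (P - p))" by (simp add: mult.assoc one_minus_p_mult_diff)
  then show ?thesis by (simp add: left_diff_distrib q_mult_range)
qed

lemma a_corner_mult_one_minus_P: "a_corner * (1 - P) = a_corner - a * (P - p)"
proof -
  have "a_corner * (1 - p) = a_corner"
    using one_minus_idempotent[of p] proj_p by (simp add: mult.assoc is_proj_def)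
  moreover have "1 - P = (1 - p) - (P - p)" by simp
  ultimately show ?thesis by (metis right_diff_distrib a_corner_mult_diff)
qed

lemma b_mult_range: "b * (a * (P - p)) = P - p"
proof -
  have "b * (a * (P - p)) = b * a_corner * (P - p)"
    using b_mult_one_minus_q a_corner_mult_diff by (metis mult.assoc)
  also have "\<dots> = P - p" using b_left_inverse one_minus_p_mult_diff by (simp add: mult.assoc)
  finally show ?thesis .
qed

end

locale block_triangular_enlargement = block_triangular_extension +
  fixes r :: 'a
  assumes proj_r: "is_proj star r" and q_r: "q * r = 0"
    and r_range: "r * (a * (P - p)) = a * (P - p)" and b_r: "(1 - P) * (b * r) = 0"
begin

lemma r_q: "r * q = 0"
  using arg_cong[OF q_r, of star] proj_q proj_r by (simp add: star_mult is_proj_def)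

lemma is_proj_enlarged: "is_proj star (q + r)"
  using proj_q proj_r q_r r_q by (simp add: is_proj_def algebra_simps star_add)

lemma one_minus_enlarged_mult_range: "(1 - (q + r)) * (a * (P - p)) = 0"
  by (simp add: left_diff_distrib distrib_right q_mult_range r_range)

lemma one_minus_enlarged_mult_one_minus_q: "(1 - (q + r)) * (1 - q) = 1 - (q + r)"
  using proj_q r_q by (simp add: algebra_simps is_proj_def)

lemma one_minus_enlarged_a_corner: "(1 - (q + r)) * a_corner * (1 - P) = (1 - (q + r)) * a_corner"
proof -
  have "(1 - (q + r)) * a_corner * (1 - P) = (1 - (q + r)) * (a_corner - a * (P - p))"
    by (metis mult.assoc a_corner_mult_one_minus_P)
  then show ?thesis
    using right_diff_distrib[of "1 - (q + r)" a_corner "a * (P - p)"] one_minus_enlarged_mult_range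
    by (metis diff_zero)
qed

lemma invertible_upto_enlarged: "invertible_upto a P (q + r)"
  unfolding invertible_upto_def
proof (intro exI[of _ "(1 - P) * b * (1 - (q + r))"] conjI)
  let ?Q = "q + r"
  have QQ: "(1 - ?Q) * (1 - ?Q) = 1 - ?Q" and PP: "(1 - P) * (1 - P) = 1 - P"
    using is_proj_enlarged proj_P one_minus_idempotent by (auto simp: is_proj_def)
  have pP: "(1 - p) * (1 - P) = 1 - P" "(1 - P) * (1 - p) = 1 - P"
    using p_le_P P_mult_p by (simp_all add: algebra_simps)
  have QaP: "(1 - ?Q) * a * (1 - P) = (1 - ?Q) * a_corner"
    using one_minus_enlarged_a_corner one_minus_enlarged_mult_one_minus_q pP(1) by (metis mult.assoc)
  have bQ: "(1 - P) * b * (1 - ?Q) = (1 - P) * b"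
  proof -
    have "1 - ?Q = (1 - q) - r" by simp
    then have "(1 - P) * b * (1 - ?Q) = (1 - P) * (b * (1 - q) - b * r)"
      by (simp only: mult.assoc right_diff_distrib[of b])
    also have "\<dots> = (1 - P) * (b * (1 - q)) - (1 - P) * (b * r)" by (rule right_diff_distrib)
    finally show ?thesis by (simp only: b_r b_mult_one_minus_q diff_zero)
  qed
  show "(1 - P) * b * (1 - ?Q) = (1 - P) * ((1 - P) * b * (1 - ?Q)) * (1 - ?Q)"
    using PP QQ by (metis mult.assoc)
  have "(1 - ?Q) * a * (1 - P) * ((1 - P) * b * (1 - ?Q)) = (1 - ?Q) * a * (1 - P) * b * (1 - ?Q)"
    using PP by (metis mult.assoc)
  also have "\<dots> = (1 - ?Q) * (a_corner * b) * (1 - ?Q)"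
    using QaP by (metis mult.assoc)
  also have "\<dots> = 1 - ?Q"
    using b_right_inverse one_minus_enlarged_mult_one_minus_q QQ by (simp add: mult.assoc)
  finally show "(1 - ?Q) * a * (1 - P) * ((1 - P) * b * (1 - ?Q)) = 1 - ?Q" .
  have "(1 - P) * b * (1 - ?Q) * (1 - ?Q) * a * (1 - P) = (1 - P) * b * ((1 - ?Q) * a_corner)"
    using QQ QaP by (metis mult.assoc)
  also have "\<dots> = (1 - P) * b * (1 - ?Q) * a_corner * (1 - P)"
    using one_minus_enlarged_a_corner by (metis mult.assoc)
  also have "\<dots> = (1 - P) * (b * a_corner) * (1 - P)" using bQ by (metis mult.assoc)
  also have "\<dots> = 1 - P" using b_left_inverse pP PP by (simp add: mult.assoc)
  finally show "(1 - P) * b * (1 - ?Q) * (1 - ?Q) * a * (1 - P) = 1 - P" .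
qed

lemma norm_one_minus_enlarged_mult:
  "norm ((1 - (q + r)) * f) \<le> norm a_corner * norm ((1 - P) * (b * f))"
proof -
  let ?Q = "q + r" and ?g = "(1 - P) * (b * f)"
  have "(1 - ?Q) * f = (1 - ?Q) * (a_corner * b) * f"
    using one_minus_enlarged_mult_one_minus_q b_right_inverse by simp
  also have "\<dots> = (1 - ?Q) * a_corner * (1 - P) * (b * f)"
    using one_minus_enlarged_a_corner by (simp add: mult.assoc)
  finally have "(1 - ?Q) * f = (1 - ?Q) * (a_corner * ?g)" by (simp add: mult.assoc)
  then have "norm ((1 - ?Q) * f) \<le> norm (1 - ?Q) * norm (a_corner * ?g)"
    by (simp add: norm_mult_ineq)
  also have "\<dots> \<le> 1 * (norm a_corner * norm ?g)"
  proof (rule mult_mono)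
    show "norm (1 - ?Q) \<le> 1"
      using is_proj_enlarged by (intro norm_proj_le_one) (simp add: is_proj_def algebra_simps star_diff)
  qed (simp_all add: norm_mult_ineq)
  finally show ?thesis by simp
qed

end

context block_triangular_extension
begin

lemma exists_enlargement:
  obtains \<tau> where "block_triangular_enlargement star cscale a p q b P
    (a * (P - p) * \<tau> * star (a * (P - p)))"
    "proj_equiv star (a * (P - p) * \<tau> * star (a * (P - p))) (P - p)"
proof -
  let ?x = "a * (P - p)"
  have xe: "?x * (P - p) = ?x" using is_proj_diff by (simp add: mult.assoc is_proj_def)
  obtain \<tau> where r: "is_proj star (?x * \<tau> * star ?x)" "?x * \<tau> * star ?x * ?x = ?x"
    and equiv: "proj_equiv star (?x * \<tau> * star ?x) (P - p)"
    using range_projection[OF is_proj_diff xe b_mult_range] by blast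
  show thesis
  proof (rule that[OF _ equiv], unfold_locales)
    show "q * (?x * \<tau> * star ?x) = 0" using q_mult_range by (simp add: mult.assoc[symmetric])
    have "(1 - P) * (P - p) = 0" using proj_P P_mult_p by (simp add: algebra_simps is_proj_def)
    then show "(1 - P) * (b * (?x * \<tau> * star ?x)) = 0"
      using b_mult_range by (simp add: mult.assoc[symmetric])
  qed (use r in \<open>simp_all add: mult.assoc\<close>)
qed

lemma enlarged_projection:
  assumes F: "sa_ideal star cscale F" "p \<in> F" "q \<in> F" "P \<in> F"
  obtains Q where "Q \<in> F" "is_proj star Q" "is_proj star (Q - q)" "proj_equiv star (Q - q) (P - p)"
    "invertible_upto a P Q" "(1 - Q) * a * (P - p) = 0"
    "\<And>f. norm ((1 - Q) * f) \<le> norm a_corner * norm ((1 - P) * (b * f))"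
proof -
  let ?x = "a * (P - p)"
  obtain \<tau> where enlargement: "block_triangular_enlargement star cscale a p q b P (?x * \<tau> * star ?x)"
    and equiv: "proj_equiv star (?x * \<tau> * star ?x) (P - p)"
    by (rule exists_enlargement)
  interpret block_triangular_enlargement star cscale a p q b P "?x * \<tau> * star ?x" by (fact enlargement)
  have "cscale (-1) p \<in> F" using F by (simp add: sa_ideal_def)
  then have "- p \<in> F" by (simp add: cscale_minus_left)
  then have "P + - p \<in> F" using F unfolding sa_ideal_def by blast
  then have "?x * \<tau> \<in> F" using F unfolding sa_ideal_def by simp
  then have "q + ?x * \<tau> * star ?x \<in> F" using F unfolding sa_ideal_def by blast
  moreover have "(1 - (q + ?x * \<tau> * star ?x)) * a * (P - p) = 0"
    using one_minus_enlarged_mult_range by (simp add: mult.assoc)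
  ultimately show thesis
    using is_proj_enlarged proj_r equiv invertible_upto_enlarged norm_one_minus_enlarged_mult
    by (intro that[of "q + ?x * \<tau> * star ?x"]) simp_all
qed

end

lemma approx_unit_proj_if_dominated:
  fixes star :: "'a::{real_normed_algebra_1, banach} \<Rightarrow> 'a" and cscale
  assumes cstar: "unital_cstar_algebra star cscale" and F: "sa_ideal star cscale F"
    and dir: "directed_set I le" and P: "approx_unit_proj star F I le P"
    and Q: "\<And>\<alpha>. \<alpha> \<in> I \<Longrightarrow> Q \<alpha> \<in> F \<and> is_proj star (Q \<alpha>)"
    and dominated: "\<And>\<alpha> f. \<alpha> \<in> I \<Longrightarrow> norm ((1 - Q \<alpha>) * f) \<le> C * norm ((1 - P \<alpha>) * (b * f))"
  shows "approx_unit_proj star F I le Q"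
  unfolding approx_unit_proj_def
proof (intro conjI ballI allI impI)
  interpret unital_cstar_algebra star cscale by (fact cstar)
  fix f and \<epsilon> :: real assume f: "f \<in> F" and \<epsilon>: "0 < \<epsilon>"
  define c where "c = \<bar>C\<bar> + 1"
  have c: "c > 0" by (simp add: c_def add_nonneg_pos)
  have small: "norm ((1 - Q \<alpha>) * g) < \<epsilon>"
    if "\<alpha> \<in> I" "norm (b * g - P \<alpha> * (b * g)) < \<epsilon> / c" for \<alpha> g
  proof -
    have "norm ((1 - Q \<alpha>) * g) \<le> C * norm (b * g - P \<alpha> * (b * g))"
      using dominated[OF that(1)] by (simp add: left_diff_distrib)
    also have "\<dots> \<le> \<bar>C\<bar> * norm (b * g - P \<alpha> * (b * g))" by (intro mult_right_mono) auto
    also have "\<dots> \<le> \<bar>C\<bar> * (\<epsilon> / c)" using that(2) by (intro mult_left_mono) auto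
    also have "\<dots> < \<epsilon>" using c \<epsilon> by (simp add: c_def field_simps)
    finally show ?thesis .
  qed
  have eventually_small: "\<exists>\<alpha>0\<in>I. \<forall>\<alpha>\<in>I. le \<alpha>0 \<alpha> \<longrightarrow> norm (g - P \<alpha> * g) < \<epsilon> / c"
    if "g \<in> F" for g
  proof -
    have "\<forall>\<delta>>0. \<exists>\<alpha>0\<in>I. \<forall>\<alpha>\<in>I. le \<alpha>0 \<alpha> \<longrightarrow> norm (g - P \<alpha> * g) < \<delta> \<and> norm (g - g * P \<alpha>) < \<delta>"
      using P that unfolding approx_unit_proj_def by blast
    then show ?thesis using c \<epsilon> by (metis (no_types, lifting) divide_pos_pos)
  qed
  have bf: "b * f \<in> F" "b * star f \<in> F" using F f by (auto simp: sa_ideal_def)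
  obtain \<alpha>1 where \<alpha>1: "\<alpha>1 \<in> I" "\<forall>\<alpha>\<in>I. le \<alpha>1 \<alpha> \<longrightarrow> norm (b * f - P \<alpha> * (b * f)) < \<epsilon> / c"
    using eventually_small[OF bf(1)] by blast
  obtain \<alpha>2 where \<alpha>2: "\<alpha>2 \<in> I"
    "\<forall>\<alpha>\<in>I. le \<alpha>2 \<alpha> \<longrightarrow> norm (b * star f - P \<alpha> * (b * star f)) < \<epsilon> / c"
    using eventually_small[OF bf(2)] by blast
  have trans: "\<And>i j k. i \<in> I \<Longrightarrow> j \<in> I \<Longrightarrow> k \<in> I \<Longrightarrow> le i j \<Longrightarrow> le j k \<Longrightarrow> le i k"
    and upper: "\<And>i j. i \<in> I \<Longrightarrow> j \<in> I \<Longrightarrow> \<exists>k\<in>I. le i k \<and> le j k"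
    using dir unfolding directed_set_def by blast+
  obtain \<alpha>0 where \<alpha>0: "\<alpha>0 \<in> I" "le \<alpha>1 \<alpha>0" "le \<alpha>2 \<alpha>0" using upper[OF \<alpha>1(1) \<alpha>2(1)] by blast
  show "\<exists>\<alpha>0\<in>I. \<forall>\<alpha>\<in>I. le \<alpha>0 \<alpha> \<longrightarrow> norm (f - Q \<alpha> * f) < \<epsilon> \<and> norm (f - f * Q \<alpha>) < \<epsilon>"
  proof (intro bexI[OF _ \<alpha>0(1)] ballI impI conjI)
    fix \<alpha> assume \<alpha>: "\<alpha> \<in> I" "le \<alpha>0 \<alpha>"
    then have "le \<alpha>1 \<alpha>" "le \<alpha>2 \<alpha>" using trans \<alpha>0 \<alpha>1(1) \<alpha>2(1) by blast+
    then have "norm ((1 - Q \<alpha>) * f) < \<epsilon>" "norm ((1 - Q \<alpha>) * star f) < \<epsilon>"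
      using small[OF \<alpha>(1)] \<alpha>1(2) \<alpha>2(2) \<alpha>(1) by simp_all
    moreover have "star (f - f * Q \<alpha>) = (1 - Q \<alpha>) * star f"
      using Q[OF \<alpha>(1)] by (simp add: star_diff star_mult is_proj_def left_diff_distrib)
    ultimately show "norm (f - Q \<alpha> * f) < \<epsilon>" "norm (f - f * Q \<alpha>) < \<epsilon>"
      by (metis norm_star left_diff_distrib mult_1)+
  qed
qed (use Q in auto)

theorem mainTheorem7:
  fixes star :: "'a::{real_normed_algebra_1, banach} \<Rightarrow> 'a"
    and cscale :: "complex \<Rightarrow> 'a \<Rightarrow> 'a"
    and F :: "'a set"
    and I :: "'i set" and le :: "'i \<Rightarrow> 'i \<Rightarrow> bool"
    and P :: "'i \<Rightarrow> 'a"
    and p q a :: 'a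
  assumes "unital_cstar_algebra star cscale"
    and "finite_type_algebra star cscale F"
    and "p \<in> F" "q \<in> F" "is_proj star p" "is_proj star q"
    and "invertible_upto a p q" "q * a * (1 - p) = 0"
    and "directed_set I le" "approx_unit_proj star F I le P"
    and "\<forall>\<alpha>\<in>I. cstar_le star cscale p (P \<alpha>)"
  shows "\<exists>Q :: 'i \<Rightarrow> 'a. approx_unit_proj star F I le Q \<and>
           (\<forall>\<alpha>\<in>I. is_proj star (Q \<alpha> - q) \<and>
                    proj_equiv star (Q \<alpha> - q) (P \<alpha> - p) \<and>
                    invertible_upto a (P \<alpha>) (Q \<alpha>) \<and>
                    (1 - Q \<alpha>) * a * (P \<alpha> - p) = 0)"
proof -
  interpret unital_cstar_algebra star cscale by fact
  have F: "sa_ideal star cscale F" using assms(2) by (simp add: finite_type_algebra_def)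
  obtain b where "b = (1 - p) * b * (1 - q)" "(1 - q) * a * (1 - p) * b = 1 - q"
    "b * (1 - q) * a * (1 - p) = 1 - p"
    using assms(7) unfolding invertible_upto_def by blast
  then interpret block_triangular star cscale a p q b by unfold_locales (use assms in auto)
  have "\<exists>Q. Q \<in> F \<and> is_proj star Q \<and> is_proj star (Q - q) \<and> proj_equiv star (Q - q) (P \<alpha> - p) \<and>
      invertible_upto a (P \<alpha>) Q \<and> (1 - Q) * a * (P \<alpha> - p) = 0 \<and>
      (\<forall>f. norm ((1 - Q) * f) \<le> norm a_corner * norm ((1 - P \<alpha>) * (b * f)))" if \<alpha>: "\<alpha> \<in> I" for \<alpha>
  proof -
    have P\<alpha>: "P \<alpha> \<in> F" "is_proj star (P \<alpha>)" using assms(10) \<alpha> by (auto simp: approx_unit_proj_def)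
    have "p * P \<alpha> = p"
      using proj_le_imp_mult_eq(2)[OF P\<alpha>(2) assms(5)] assms(11) \<alpha> by (simp add: cstar_le_def)
    then interpret block_triangular_extension star cscale a p q b "P \<alpha>"
      using P\<alpha> by unfold_locales
    show ?thesis using enlarged_projection[OF F assms(3,4) P\<alpha>(1)] by metis
  qed
  then obtain Q where Q: "\<And>\<alpha>. \<alpha> \<in> I \<Longrightarrow> Q \<alpha> \<in> F \<and> is_proj star (Q \<alpha>) \<and> is_proj star (Q \<alpha> - q) \<and>
      proj_equiv star (Q \<alpha> - q) (P \<alpha> - p) \<and> invertible_upto a (P \<alpha>) (Q \<alpha>) \<and>
      (1 - Q \<alpha>) * a * (P \<alpha> - p) = 0 \<and>
      (\<forall>f. norm ((1 - Q \<alpha>) * f) \<le> norm a_corner * norm ((1 - P \<alpha>) * (b * f)))"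
    by metis
  have "approx_unit_proj star F I le Q"
    using approx_unit_proj_if_dominated[OF assms(1) F assms(9,10)] Q by blast
  then show ?thesis using Q by blast
qed

end
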